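(* Let $L$ be a number field, $\Gamma$ an order of $L$, $K\subseteq L$ a subfield with ring of integers $\mathcal O_K$ and $n=[L:K]$, $R=\mathrm M_n(\mathcal O_K)$, and $\varphi:K\to L$ a ring morphism. Then there is a bijection $\operatorname{Hom}_\varphi(\Gamma,R)/R^\times\cong J_\varphi$.
   Context: $L$ is a $K$-algebra via $\varphi$; a ring morphism $\rho:\Gamma\to R$ is $\varphi$-compatible if $\rho\otimes\mathbb Q:L\to\mathrm M_n(K)$ is a morphism of $K$-algebras; $\operatorname{Hom}_\varphi(\Gamma,R)$ is the set of such $\rho$, on which $R^\times$ acts by conjugation. Fix a positive integer $z$ with $\varphi(z\mathcal O_K)\subseteq\Gamma$ and let $\mathcal O'=\mathbb Z[z\mathcal O_K]\subseteq\mathcal O_K$; then $\varphi$ restricts to a ring morphism $\mathcal O'\to\Gamma$, giving each $\Gamma$-module $X$ an $\mathcal O'$-module structure $X|_{\mathcal O'}$. Let $\mathcal O_K^n|_{\mathcal O'}$ be $\mathcal O_K^n$ with the $\mathcal O'$-action by (diagonal) multiplication through $\mathcal O'\subseteq\mathcal O_K$. $J_\varphi$ is the set of isomorphism classes of $\Gamma$-modules $X$ with $X|_{\mathcal O'}\cong\mathcal O_K^n|_{\mathcal O'}$ as $\mathcal O'$-modules (this set does not depend on the choice of $z$). *)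

theory Defs
  imports "Jordan_Normal_Form.Matrix" "HOL-Algebra.Module" "HOL-Computational_Algebra.Polynomial"
    "HOL-Library.FuncSet"
begin

text \<open>The number field L is modelled as the whole of a type 'a of characteristic 0
  which is finite-dimensional over the rationals.\<close>

definition number_field_type :: "'a::field_char_0 itself \<Rightarrow> bool" where
  "number_field_type _ \<longleftrightarrow>
     (\<exists>B::'a set. finite B \<and> (\<forall>x::'a. \<exists>c. x = (\<Sum>b\<in>B. of_rat (c b) * b)))"

definition is_subfield :: "'a::field set \<Rightarrow> bool" where
  "is_subfield K \<longleftrightarrow> 0 \<in> K \<and> 1 \<in> K \<and> (\<forall>a\<in>K. \<forall>b\<in>K. a + b \<in> K \<and> a - b \<in> K \<and> a * b \<in> K)
     \<and> (\<forall>a\<in>K. a \<noteq> 0 \<longrightarrow> inverse a \<in> K)"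

definition is_subring :: "'a::comm_ring_1 set \<Rightarrow> bool" where
  "is_subring S \<longleftrightarrow> 1 \<in> S \<and> (\<forall>a\<in>S. \<forall>b\<in>S. a + b \<in> S \<and> a - b \<in> S \<and> a * b \<in> S)"

definition is_order :: "'a::field_char_0 set \<Rightarrow> bool" where
  "is_order G \<longleftrightarrow> is_subring G
     \<and> (\<exists>B. finite B \<and> B \<subseteq> G \<and> G = {(\<Sum>b\<in>B. of_int (c b) * b) | c. True})
     \<and> (\<forall>x::'a. \<exists>m::int. m \<noteq> 0 \<and> of_int m * x \<in> G)"

definition algebraic_integer :: "'a::field_char_0 \<Rightarrow> bool" where
  "algebraic_integer x \<longleftrightarrow> (\<exists>p::int poly. lead_coeff p = 1 \<and> poly (map_poly of_int p) x = 0)"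

definition ring_of_integers :: "'a::field_char_0 set \<Rightarrow> 'a set" where
  "ring_of_integers K = {x \<in> K. algebraic_integer x}"

definition is_K_basis :: "'a::field set \<Rightarrow> 'a set \<Rightarrow> bool" where
  "is_K_basis K B \<longleftrightarrow> finite B
     \<and> (\<forall>x::'a. \<exists>c. (\<forall>b\<in>B. c b \<in> K) \<and> x = (\<Sum>b\<in>B. c b * b))
     \<and> (\<forall>c. (\<forall>b\<in>B. c b \<in> K) \<and> (\<Sum>b\<in>B. c b * b) = 0 \<longrightarrow> (\<forall>b\<in>B. c b = 0))"

definition field_degree :: "'a::field set \<Rightarrow> nat" where
  "field_degree K = (THE n. \<exists>B. is_K_basis K B \<and> card B = n)"

definition ring_morphism_on :: "'a::field set \<Rightarrow> ('a \<Rightarrow> 'a) \<Rightarrow> bool" where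
  "ring_morphism_on K f \<longleftrightarrow> f 1 = 1 \<and> (\<forall>a\<in>K. \<forall>b\<in>K. f (a + b) = f a + f b \<and> f (a * b) = f a * f b)"

definition matR :: "'a::field_char_0 set \<Rightarrow> nat \<Rightarrow> 'a mat set" where
  "matR K n = {A \<in> carrier_mat n n. \<forall>i<n. \<forall>j<n. A $$ (i, j) \<in> ring_of_integers K}"

definition matK :: "'a::field set \<Rightarrow> nat \<Rightarrow> 'a mat set" where
  "matK K n = {A \<in> carrier_mat n n. \<forall>i<n. \<forall>j<n. A $$ (i, j) \<in> K}"

definition unitsR :: "'a::field_char_0 set \<Rightarrow> nat \<Rightarrow> 'a mat set" where
  "unitsR K n = {u \<in> matR K n. \<exists>v\<in>matR K n. u * v = 1\<^sub>m n \<and> v * u = 1\<^sub>m n}"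

definition ring_hom_GR :: "'a::field_char_0 set \<Rightarrow> 'a set \<Rightarrow> nat \<Rightarrow> ('a \<Rightarrow> 'a mat) \<Rightarrow> bool" where
  "ring_hom_GR G K n \<rho> \<longleftrightarrow> \<rho> \<in> extensional G \<and> (\<forall>x\<in>G. \<rho> x \<in> matR K n)
     \<and> \<rho> 1 = 1\<^sub>m n \<and> (\<forall>x\<in>G. \<forall>y\<in>G. \<rho> (x + y) = \<rho> x + \<rho> y \<and> \<rho> (x * y) = \<rho> x * \<rho> y)"

definition rho_Q :: "'a::field_char_0 set \<Rightarrow> ('a \<Rightarrow> 'a mat) \<Rightarrow> 'a \<Rightarrow> 'a mat" where
  "rho_Q G \<rho> x = (let m = (SOME m::int. m \<noteq> 0 \<and> of_int m * x \<in> G)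
                     in (1 / of_int m) \<cdot>\<^sub>m \<rho> (of_int m * x))"

definition phi_compatible :: "'a::field_char_0 set \<Rightarrow> 'a set \<Rightarrow> nat \<Rightarrow> ('a \<Rightarrow> 'a) \<Rightarrow> ('a \<Rightarrow> 'a mat) \<Rightarrow> bool" where
  "phi_compatible G K n \<phi> \<rho> \<longleftrightarrow>
     (\<forall>x. rho_Q G \<rho> x \<in> matK K n)
     \<and> rho_Q G \<rho> 1 = 1\<^sub>m n
     \<and> (\<forall>x y. rho_Q G \<rho> (x + y) = rho_Q G \<rho> x + rho_Q G \<rho> y)
     \<and> (\<forall>x y. rho_Q G \<rho> (x * y) = rho_Q G \<rho> x * rho_Q G \<rho> y)
     \<and> (\<forall>k\<in>K. \<forall>x. rho_Q G \<rho> (\<phi> k * x) = k \<cdot>\<^sub>m rho_Q G \<rho> x)"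

definition Hom_phi :: "'a::field_char_0 set \<Rightarrow> 'a set \<Rightarrow> nat \<Rightarrow> ('a \<Rightarrow> 'a) \<Rightarrow> ('a \<Rightarrow> 'a mat) set" where
  "Hom_phi G K n \<phi> = {\<rho>. ring_hom_GR G K n \<rho> \<and> phi_compatible G K n \<phi> \<rho>}"

definition conj_rel :: "'a::field_char_0 set \<Rightarrow> 'a set \<Rightarrow> nat \<Rightarrow> ('a \<Rightarrow> 'a) \<Rightarrow> (('a \<Rightarrow> 'a mat) \<times> ('a \<Rightarrow> 'a mat)) set" where
  "conj_rel G K n \<phi> = {(\<rho>, \<sigma>). \<rho> \<in> Hom_phi G K n \<phi> \<and> \<sigma> \<in> Hom_phi G K n \<phi> \<and>
     (\<exists>u\<in>unitsR K n. \<exists>v\<in>matR K n. u * v = 1\<^sub>m n \<and> v * u = 1\<^sub>m n \<and> \<sigma> = (\<lambda>x\<in>G. u * \<rho> x * v))}"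

definition subring_ring :: "'a::comm_ring_1 set \<Rightarrow> 'a ring" where
  "subring_ring S = \<lparr>carrier = S, monoid.mult = (*), one = 1, zero = 0, add = (+)\<rparr>"

definition O_prime :: "'a::field_char_0 set \<Rightarrow> int \<Rightarrow> 'a set" where
  "O_prime K z = \<Inter>{S. is_subring S \<and> (\<lambda>a. of_int z * a) ` ring_of_integers K \<subseteq> S}"

definition module_iso :: "'r set \<Rightarrow> ('r, 'm) module \<Rightarrow> ('r, 'n) module \<Rightarrow> ('m \<Rightarrow> 'n) \<Rightarrow> bool" where
  "module_iso S M N f \<longleftrightarrow> bij_betw f (carrier M) (carrier N)
     \<and> (\<forall>x\<in>carrier M. \<forall>y\<in>carrier M. f (x \<oplus>\<^bsub>M\<^esub> y) = f x \<oplus>\<^bsub>N\<^esub> f y)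
     \<and> (\<forall>a\<in>S. \<forall>x\<in>carrier M. f (a \<odot>\<^bsub>M\<^esub> x) = a \<odot>\<^bsub>N\<^esub> f x)"

definition restrict_scalars :: "('a \<Rightarrow> 'a) \<Rightarrow> ('a, 'm) module \<Rightarrow> ('a, 'm) module" where
  "restrict_scalars \<phi> X = X\<lparr>module.smult := (\<lambda>a x. module.smult X (\<phi> a) x)\<rparr>"

definition OKn_module :: "'a::field_char_0 set \<Rightarrow> nat \<Rightarrow> ('a, 'a vec) module" where
  "OKn_module K n = \<lparr>carrier = {v \<in> carrier_vec n. \<forall>i<n. v $ i \<in> ring_of_integers K},
     monoid.mult = (\<lambda>_ _. 0\<^sub>v n), one = 0\<^sub>v n, zero = 0\<^sub>v n, add = (+), module.smult = (\<lambda>a v. a \<cdot>\<^sub>v v)\<rparr>"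

text \<open>Gamma-modules X (carrier inside a fixed countably infinite type, which suffices
  up to isomorphism since all such modules are countable) with X|O' = O_K^n|O'.\<close>
definition J_mods :: "'a::field_char_0 set \<Rightarrow> 'a set \<Rightarrow> nat \<Rightarrow> ('a \<Rightarrow> 'a) \<Rightarrow> int \<Rightarrow> ('a, nat) module set" where
  "J_mods G K n \<phi> z = {X. module (subring_ring G) X \<and>
      (\<exists>f. module_iso (O_prime K z) (restrict_scalars \<phi> X) (OKn_module K n) f)}"

definition Gamma_iso_rel :: "'a::field_char_0 set \<Rightarrow> ('a, nat) module set \<Rightarrow> (('a, nat) module \<times> ('a, nat) module) set" where
  "Gamma_iso_rel G S = {(X, Y). X \<in> S \<and> Y \<in> S \<and> (\<exists>f. module_iso G X Y f)}"

end

theory Submission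
  imports Defs "Jordan_Normal_Form.Char_Poly" "HOL-Library.Countable"
begin

text \<open>
  A \<open>\<phi>\<close>-compatible \<open>\<rho> : \<Gamma> \<rightarrow> M_n(O_K)\<close> makes \<open>O_K^n\<close> a \<open>\<Gamma>\<close>-module \<open>V_\<rho>\<close> on which
  \<open>O' = \<int>[z O_K]\<close> acts through \<open>\<phi>\<close> by scalars; \<open>\<phi>\<close>-compatibility is equivalent to this, after
  clearing denominators. So \<open>V_\<rho>\<close> lies in \<open>J_\<phi>\<close>, and conjugating \<open>\<rho>\<close> by a unit of \<open>R\<close> gives an
  isomorphic module. Conversely, transporting the action of \<open>\<Gamma>\<close> on a module \<open>X \<in> J_\<phi>\<close> along an
  \<open>O'\<close>-isomorphism \<open>X \<cong> O_K^n\<close> yields additive endomorphisms of \<open>O_K^n\<close> commuting with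
  \<open>z O_K\<close>. As \<open>O_K^n\<close> has no \<open>z\<close>-torsion they are \<open>O_K\<close>-linear, i.e. matrices in \<open>R\<close>, and they
  form a \<open>\<phi>\<close>-compatible \<open>\<rho>\<close> with \<open>X \<cong> V_\<rho>\<close>. The same argument turns a \<open>\<Gamma>\<close>-isomorphism
  \<open>V_\<rho> \<cong> V_\<sigma>\<close> into a matrix of \<open>R\<^sup>\<times>\<close> conjugating \<open>\<rho>\<close> into \<open>\<sigma>\<close>. Since \<open>L\<close> is countable,
  every \<open>V_\<rho>\<close> can be realised on the carrier type \<open>nat\<close> used by \<open>J_mods\<close>.
\<close>

section \<open>Algebraic integers\<close>

definition int_span :: "'a::comm_ring_1 set \<Rightarrow> 'a set" where
  "int_span W = {\<Sum>w\<in>W. of_int (c w) * w | c. True}"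

lemma int_span_iff: "x \<in> int_span W \<longleftrightarrow> (\<exists>c. x = (\<Sum>w\<in>W. of_int (c w) * w))"
  unfolding int_span_def by blast

lemma int_span_add:
  assumes "x \<in> int_span W" "y \<in> int_span W"
  shows "x + y \<in> int_span W"
proof -
  obtain c d where "x = (\<Sum>w\<in>W. of_int (c w) * w)" "y = (\<Sum>w\<in>W. of_int (d w) * w)"
    using assms unfolding int_span_iff by blast
  then have "x + y = (\<Sum>w\<in>W. of_int (c w + d w) * w)"
    by (simp add: sum.distrib distrib_right)
  then show ?thesis unfolding int_span_iff by (rule exI[where x = "\<lambda>w. c w + d w"])
qed

lemma int_span_of_int_mult:
  assumes "x \<in> int_span W"
  shows "of_int k * x \<in> int_span W"
proof -
  obtain c where "x = (\<Sum>w\<in>W. of_int (c w) * w)" using assms unfolding int_span_iff by blast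
  then have "of_int k * x = (\<Sum>w\<in>W. of_int (k * c w) * w)"
    by (simp add: sum_distrib_left mult.assoc)
  then show ?thesis unfolding int_span_iff by (rule exI[where x = "\<lambda>w. k * c w"])
qed

lemma int_span_sum: "finite I \<Longrightarrow> (\<And>i. i \<in> I \<Longrightarrow> f i \<in> int_span W) \<Longrightarrow> sum f I \<in> int_span W"
proof (induction I rule: finite_induct)
  case empty
  show ?case unfolding int_span_iff by (intro exI[of _ "\<lambda>_. 0"]) simp
qed (auto intro: int_span_add)

lemma int_span_base:
  assumes "finite W" "u \<in> W" shows "u \<in> int_span W"
proof -
  have "(\<Sum>w\<in>W. of_int (if w = u then 1 else 0) * w) = (\<Sum>w\<in>W. if w = u then w else 0)"
    by (rule sum.cong) auto
  then have "u = (\<Sum>w\<in>W. of_int (if w = u then 1 else 0) * w)"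
    using assms by (simp add: sum.delta')
  then show ?thesis unfolding int_span_iff by (rule exI[where x = "\<lambda>w. if w = u then 1 else 0"])
qed

lemma int_span_mult_stable:
  assumes "finite W" "\<forall>w\<in>W. t * w \<in> int_span W" "x \<in> int_span W"
  shows "t * x \<in> int_span W"
proof -
  obtain c where "x = (\<Sum>w\<in>W. of_int (c w) * w)" using assms(3) unfolding int_span_iff ..
  then have "t * x = (\<Sum>w\<in>W. of_int (c w) * (t * w))"
    by (simp add: sum_distrib_left algebra_simps)
  also have "\<dots> \<in> int_span W"
    using assms(1,2) by (intro int_span_sum int_span_of_int_mult) auto
  finally show ?thesis .
qed

lemma algebraic_integer_if_eigenvalue:
  fixes t :: "'a::field_char_0"
  assumes A: "A \<in> carrier_mat r r" and t: "eigenvalue (of_int_hom.mat_hom A) t"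
  shows "algebraic_integer t"
proof -
  have "of_int_hom.mat_hom A \<in> carrier_mat r r" using A by simp
  then have "poly (char_poly (of_int_hom.mat_hom A)) t = 0"
    using eigenvalue_root_char_poly t by blast
  then have "poly (of_int_poly (char_poly A)) t = 0"
    using of_int_hom.char_poly_hom[OF A] by metis
  moreover have "lead_coeff (char_poly A) = 1" using degree_monic_char_poly[OF A] by simp
  ultimately show ?thesis unfolding algebraic_integer_def by blast
qed

text \<open>\<open>t\<close> is an eigenvalue of the integer matrix expressing multiplication by \<open>t\<close> on \<open>W\<close>.\<close>
lemma algebraic_integer_if_int_span_stable:
  fixes t :: "'a::field_char_0"
  assumes W: "finite W" and w0: "w0 \<in> W" "w0 \<noteq> 0" and stable: "\<forall>w\<in>W. t * w \<in> int_span W"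
  shows "algebraic_integer t"
proof -
  obtain ws where ws: "set ws = W" "distinct ws" using finite_distinct_list[OF W] by blast
  define r where "r = length ws"
  have "\<forall>k<r. \<exists>c. t * ws ! k = (\<Sum>w\<in>W. of_int (c w) * w)"
    using stable ws unfolding r_def int_span_iff by auto
  then obtain C where C: "\<And>k. k < r \<Longrightarrow> t * ws ! k = (\<Sum>w\<in>W. of_int (C k w) * w)"
    by metis
  define A where "A = mat r r (\<lambda>(k, l). C k (ws ! l))"
  define v where "v = vec r (\<lambda>l. ws ! l)"
  have A: "A \<in> carrier_mat r r" unfolding A_def by simp
  have "of_int_hom.mat_hom A *\<^sub>v v = t \<cdot>\<^sub>v v"
  proof (rule eq_vecI)
    fix k assume "k < dim_vec (t \<cdot>\<^sub>v v)"
    then have k: "k < r" unfolding v_def by simp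
    have "(of_int_hom.mat_hom A *\<^sub>v v) $ k = (\<Sum>l<r. of_int (C k (ws ! l)) * ws ! l)"
      using k unfolding A_def v_def by (simp add: scalar_prod_def atLeast0LessThan)
    also have "\<dots> = (\<Sum>w\<in>W. of_int (C k w) * w)"
      unfolding r_def ws(1)[symmetric] sum.distinct_set_conv_list[OF ws(2)] sum_list_sum_nth
      by (auto simp: atLeast0LessThan intro!: sum.cong)
    also have "\<dots> = (t \<cdot>\<^sub>v v) $ k" using C[OF k] k unfolding v_def by simp
    finally show "(of_int_hom.mat_hom A *\<^sub>v v) $ k = (t \<cdot>\<^sub>v v) $ k" .
  qed (simp add: A_def v_def)
  moreover have "v \<noteq> 0\<^sub>v r"
  proof
    assume "v = 0\<^sub>v r"
    obtain l where "l < r" "ws ! l = w0" using w0 ws unfolding r_def by (metis in_set_conv_nth)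
    with \<open>v = 0\<^sub>v r\<close> w0 show False unfolding v_def by (metis index_vec index_zero_vec(1))
  qed
  ultimately have "eigenvector (of_int_hom.mat_hom A) v t"
    unfolding eigenvector_def using A by (simp add: v_def)
  then have "eigenvalue (of_int_hom.mat_hom A) t" unfolding eigenvalue_def by blast
  then show ?thesis by (rule algebraic_integer_if_eigenvalue[OF A])
qed

lemma monic_root_power:
  fixes x :: "'a::field_char_0"
  assumes "lead_coeff p = 1" "poly (of_int_poly p) x = 0"
  shows "x ^ degree p = (\<Sum>l<degree p. of_int (- coeff p l) * x ^ l)"
proof -
  have "{..degree p} = insert (degree p) {..<degree p}" by auto
  then have "poly (of_int_poly p) x = (\<Sum>l<degree p. of_int (coeff p l) * x ^ l) + x ^ degree p"
    using assms(1) by (simp add: poly_altdef add.commute)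
  with assms(2) show ?thesis by (simp add: sum_negf add_eq_0_iff)
qed

lemma monic_root_degree_pos:
  fixes x :: "'a::field_char_0"
  assumes "lead_coeff p = 1" "poly (of_int_poly p) x = 0"
  shows "degree p > 0"
  using monic_root_power[OF assms] by (cases "degree p") auto

lemma monomials_int_span_stable:
  fixes x y :: "'a::field_char_0"
  assumes "lead_coeff p = 1" "poly (of_int_poly p) x = 0"
    and W: "W = (\<lambda>(i, j). x ^ i * y ^ j) ` ({..<degree p} \<times> {..<e})"
  shows "\<forall>w\<in>W. x * w \<in> int_span W"
proof
  have fW: "finite W" using W by simp
  fix w assume "w \<in> W"
  then obtain i j where ij: "i < degree p" "j < e" "w = x ^ i * y ^ j" using W by auto
  show "x * w \<in> int_span W"
  proof (cases "Suc i < degree p")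
    case True
    then have "x * w \<in> W" using ij W by (auto intro!: image_eqI[of _ _ "(Suc i, j)"])
    then show ?thesis using fW int_span_base by blast
  next
    case False
    then have "Suc i = degree p" using ij by simp
    then have "x * w = x ^ degree p * y ^ j" using ij(3) by (metis mult.assoc power_Suc)
    also have "\<dots> = (\<Sum>l<degree p. of_int (- coeff p l) * (x ^ l * y ^ j))"
      unfolding monic_root_power[OF assms(1,2)] by (simp add: sum_distrib_right mult.assoc)
    also have "\<dots> \<in> int_span W"
      using ij W by (intro int_span_sum int_span_of_int_mult int_span_base[OF fW]) auto
    finally show ?thesis .
  qed
qed

lemma algebraic_integers_common_stable_int_span:
  fixes x y :: "'a::field_char_0"
  assumes "algebraic_integer x" "algebraic_integer y"
  obtains W where "finite W" "1 \<in> W" "\<forall>w\<in>W. x * w \<in> int_span W" "\<forall>w\<in>W. y * w \<in> int_span W"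
proof -
  obtain p where p: "lead_coeff p = 1" "poly (of_int_poly p) x = 0"
    using assms(1) unfolding algebraic_integer_def by blast
  obtain q where q: "lead_coeff q = 1" "poly (of_int_poly q) y = 0"
    using assms(2) unfolding algebraic_integer_def by blast
  define W where "W = (\<lambda>(i, j). x ^ i * y ^ j) ` ({..<degree p} \<times> {..<degree q})"
  have W': "W = (\<lambda>(j, i). y ^ j * x ^ i) ` ({..<degree q} \<times> {..<degree p})"
    unfolding W_def by (auto simp: mult.commute image_iff)
  have "finite W" unfolding W_def by simp
  moreover have "1 \<in> W"
    unfolding W_def using monic_root_degree_pos[OF p] monic_root_degree_pos[OF q]
    by (auto intro!: image_eqI[of _ _ "(0, 0)"])
  ultimately show thesis
    using that monomials_int_span_stable[OF p W_def] monomials_int_span_stable[OF q W'] by blast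
qed

lemma algebraic_integer_add:
  fixes x y :: "'a::field_char_0"
  assumes "algebraic_integer x" "algebraic_integer y"
  shows "algebraic_integer (x + y)"
proof -
  obtain W where W: "finite W" "1 \<in> W" "\<forall>w\<in>W. x * w \<in> int_span W" "\<forall>w\<in>W. y * w \<in> int_span W"
    using algebraic_integers_common_stable_int_span[OF assms] .
  then have "\<forall>w\<in>W. (x + y) * w \<in> int_span W" by (simp add: distrib_right int_span_add)
  with W(1,2) show ?thesis by (intro algebraic_integer_if_int_span_stable) auto
qed

lemma algebraic_integer_mult:
  fixes x y :: "'a::field_char_0"
  assumes "algebraic_integer x" "algebraic_integer y"
  shows "algebraic_integer (x * y)"
proof -
  obtain W where W: "finite W" "1 \<in> W" "\<forall>w\<in>W. x * w \<in> int_span W" "\<forall>w\<in>W. y * w \<in> int_span W"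
    using algebraic_integers_common_stable_int_span[OF assms] .
  then have "\<forall>w\<in>W. (x * y) * w \<in> int_span W"
    by (simp add: mult.assoc int_span_mult_stable)
  with W(1,2) show ?thesis by (intro algebraic_integer_if_int_span_stable) auto
qed

lemma algebraic_integer_of_int: "algebraic_integer (of_int k :: 'a::field_char_0)"
  unfolding algebraic_integer_def by (intro exI[of _ "[:-k, 1:]"]) simp

lemma algebraic_integer_diff:
  fixes x y :: "'a::field_char_0"
  assumes "algebraic_integer x" "algebraic_integer y"
  shows "algebraic_integer (x - y)"
  using algebraic_integer_add[OF assms(1) algebraic_integer_mult[OF algebraic_integer_of_int assms(2)],
      of "-1"]
  by simp

section \<open>Subrings, orders and \<open>O'\<close>\<close>

lemma
  assumes "is_subring S"
  shows subring_one: "1 \<in> S" and subring_zero: "0 \<in> S"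
    and subring_add: "a \<in> S \<Longrightarrow> b \<in> S \<Longrightarrow> a + b \<in> S"
    and subring_diff: "a \<in> S \<Longrightarrow> b \<in> S \<Longrightarrow> a - b \<in> S"
    and subring_mult: "a \<in> S \<Longrightarrow> b \<in> S \<Longrightarrow> a * b \<in> S"
    and subring_uminus: "a \<in> S \<Longrightarrow> - a \<in> S"
  using assms unfolding is_subring_def by (metis diff_self diff_0)+

lemma subring_of_int: "is_subring S \<Longrightarrow> of_int k \<in> S"
proof (induction k rule: int_induct[of _ 0])
  case base then show ?case using subring_zero by simp
next
  case (step1 i) then show ?case using subring_add subring_one by force
next
  case (step2 i) then show ?case using subring_diff subring_one by force
qed

lemma subring_of_int_mult: "is_subring S \<Longrightarrow> a \<in> S \<Longrightarrow> of_int k * a \<in> S"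
  by (simp add: subring_mult subring_of_int)

lemma subring_sum: "is_subring S \<Longrightarrow> (\<And>i. i \<in> I \<Longrightarrow> f i \<in> S) \<Longrightarrow> sum f I \<in> S"
  by (induction I rule: infinite_finite_induct) (auto simp: subring_zero subring_add)

lemma subfield_is_subring: "is_subfield K \<Longrightarrow> is_subring K"
  unfolding is_subfield_def is_subring_def by blast

lemma subfield_inverse: "is_subfield K \<Longrightarrow> a \<in> K \<Longrightarrow> inverse a \<in> K"
  unfolding is_subfield_def by (cases "a = 0") auto

lemma ring_of_integers_subring: "is_subfield K \<Longrightarrow> is_subring (ring_of_integers K)"
  using subfield_is_subring[of K]
  unfolding is_subring_def ring_of_integers_def
  by (auto intro: algebraic_integer_add algebraic_integer_diff algebraic_integer_mult
      algebraic_integer_of_int[of 1, simplified])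

lemma order_subring: "is_order G \<Longrightarrow> is_subring G"
  unfolding is_order_def by blast

lemma order_denominator: "is_order G \<Longrightarrow> \<exists>m::int. m \<noteq> 0 \<and> of_int m * x \<in> G"
  unfolding is_order_def by blast

lemma order_common_denominator:
  assumes "is_order G"
  obtains m :: int where "m \<noteq> 0" "of_int m * x \<in> G" "of_int m * y \<in> G"
proof -
  obtain mx my :: int where m: "mx \<noteq> 0" "of_int mx * x \<in> G" "my \<noteq> 0" "of_int my * y \<in> G"
    using order_denominator[OF assms] by metis
  have "of_int (my * mx) * x \<in> G" "of_int (mx * my) * y \<in> G"
    using subring_of_int_mult[OF order_subring[OF assms]] m by (simp_all add: mult.assoc)
  with m show thesis by (intro that[of "mx * my"]) (simp_all add: mult.commute)
qed

lemma order_algebraic_integer: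
  assumes "is_order G" "x \<in> G"
  shows "algebraic_integer x"
proof -
  obtain B where B: "finite B" "B \<subseteq> G" "G = int_span B"
    using assms(1) unfolding is_order_def int_span_def by blast
  have "\<exists>b\<in>B. b \<noteq> 0"
  proof (rule ccontr)
    assume "\<not> (\<exists>b\<in>B. b \<noteq> 0)"
    then have "G \<subseteq> {0}" unfolding B(3) int_span_def by (auto intro!: sum.neutral)
    then show False using subring_one[OF order_subring[OF assms(1)]] by auto
  qed
  moreover have "\<forall>w\<in>B. x * w \<in> int_span B"
    using B assms subring_mult[OF order_subring[OF assms(1)]] by blast
  ultimately show ?thesis using algebraic_integer_if_int_span_stable[OF B(1)] by blast
qed

lemma ring_of_integers_denominator:
  fixes G K :: "'a::field_char_0 set"
  assumes "is_order G" "is_subfield K" "k \<in> K"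
  shows "\<exists>N::int. N \<noteq> 0 \<and> of_int N * k \<in> ring_of_integers K"
proof -
  obtain m :: int where "m \<noteq> 0" "of_int m * k \<in> G" using order_denominator[OF assms(1)] by blast
  moreover have "of_int m * k \<in> K"
    using subring_of_int_mult[OF subfield_is_subring] assms(2,3) .
  ultimately show ?thesis
    using order_algebraic_integer[OF assms(1)] unfolding ring_of_integers_def by blast
qed

lemma cring_subring_ring: "is_subring S \<Longrightarrow> cring (subring_ring S)"
proof (rule cringI)
  assume S: "is_subring S"
  show "abelian_group (subring_ring S)"
  proof (rule abelian_groupI)
    fix x assume "x \<in> carrier (subring_ring S)"
    then show "\<exists>y\<in>carrier (subring_ring S). y \<oplus>\<^bsub>subring_ring S\<^esub> x = \<zero>\<^bsub>subring_ring S\<^esub>"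
      using S by (intro bexI[of _ "- x"]) (auto simp: subring_ring_def subring_uminus)
  qed (use S in \<open>simp_all add: subring_ring_def subring_add subring_zero add.assoc add.commute\<close>)
  show "comm_monoid (subring_ring S)"
    by (rule comm_monoidI)
      (use S in \<open>simp_all add: subring_ring_def subring_mult subring_one mult.assoc mult.commute\<close>)
qed (simp add: subring_ring_def distrib_right)

lemma subring_ring_simps:
  "carrier (subring_ring S) = S" "add (subring_ring S) = (+)"
  "monoid.mult (subring_ring S) = (*)" "one (subring_ring S) = 1"
  unfolding subring_ring_def by simp_all

lemma additive_of_int_mult:
  fixes f :: "'a::comm_ring_1 \<Rightarrow> 'b::comm_ring_1"
  assumes S: "is_subring S" and x: "x \<in> S"
    and add: "\<And>a b. a \<in> S \<Longrightarrow> b \<in> S \<Longrightarrow> f (a + b) = f a + f b"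
  shows "f (of_int k * x) = of_int k * f x"
proof -
  have mult_S: "of_nat m * x \<in> S" for m
    using subring_of_int_mult[OF S x, of "int m"] by simp
  have zero: "f 0 = 0" using add[of 0 0] subring_zero[OF S] by simp
  have nat: "f (of_nat m * x) = of_nat m * f x" for m
    by (induction m) (simp_all add: zero distrib_right add x mult_S)
  have "f (- y) = - f y" if "y \<in> S" for y
    using add[of "- y" y] that subring_uminus[OF S] zero by (simp add: eq_neg_iff_add_eq_0)
  then show ?thesis
    using nat mult_S by (cases k rule: int_cases) (simp_all del: of_nat_Suc)
qed

lemma ring_morphism_on_diff:
  assumes "is_subfield K" "ring_morphism_on K \<phi>" "a \<in> K" "b \<in> K"
  shows "\<phi> (a - b) = \<phi> a - \<phi> b"
proof -
  have "a - b \<in> K" using assms(1,3,4) unfolding is_subfield_def by blast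
  then have "\<phi> (a - b + b) = \<phi> (a - b) + \<phi> b"
    using assms(2,4) unfolding ring_morphism_on_def by blast
  then show ?thesis by simp
qed

lemma ring_morphism_on_of_int:
  assumes "is_subfield K" "ring_morphism_on K \<phi>"
  shows "\<phi> (of_int k) = of_int k"
proof -
  have K: "is_subring K" using subfield_is_subring[OF assms(1)] .
  have "\<phi> (of_int k * 1) = of_int k * \<phi> 1"
    using assms(2) unfolding ring_morphism_on_def by (intro additive_of_int_mult[OF K subring_one[OF K]]) auto
  then show ?thesis using assms(2) unfolding ring_morphism_on_def by simp
qed

lemma O_prime_least:
  "is_subring S \<Longrightarrow> (\<lambda>a. of_int z * a) ` ring_of_integers K \<subseteq> S \<Longrightarrow> O_prime K z \<subseteq> S"
  unfolding O_prime_def by blast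

lemma O_prime_multiple: "b \<in> ring_of_integers K \<Longrightarrow> of_int z * b \<in> O_prime K z"
  unfolding O_prime_def by blast

lemma O_prime_subset_ring_of_integers:
  assumes "is_subfield K"
  shows "O_prime K z \<subseteq> ring_of_integers K"
  using ring_of_integers_subring[OF assms]
  by (intro O_prime_least) (auto intro: subring_of_int_mult)

lemma ring_morphism_on_O_prime:
  assumes K: "is_subfield K" and \<phi>: "ring_morphism_on K \<phi>" and G: "is_subring G"
    and zG: "(\<lambda>a. \<phi> (of_int z * a)) ` ring_of_integers K \<subseteq> G"
  shows "\<phi> ` O_prime K z \<subseteq> G"
proof -
  let ?S = "{a \<in> ring_of_integers K. \<phi> a \<in> G}"
  have OK: "is_subring (ring_of_integers K)" using ring_of_integers_subring[OF K] .
  have "is_subring ?S"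
    unfolding is_subring_def
  proof (intro conjI ballI)
    show "1 \<in> ?S" using OK G \<phi> by (simp add: subring_one ring_morphism_on_def)
    fix a b assume a: "a \<in> ?S" and b: "b \<in> ?S"
    then have "a \<in> K" "b \<in> K" unfolding ring_of_integers_def by auto
    then show "a + b \<in> ?S" "a - b \<in> ?S" "a * b \<in> ?S"
      using a b OK G \<phi> ring_morphism_on_diff[OF K \<phi>]
      by (auto simp: subring_add subring_diff subring_mult ring_morphism_on_def)
  qed
  moreover have "(\<lambda>a. of_int z * a) ` ring_of_integers K \<subseteq> ?S"
    using zG OK by (auto intro: subring_of_int_mult)
  ultimately show ?thesis using O_prime_least by blast
qed

section \<open>Isomorphisms and quotients\<close>

lemma module_iso_id: "module_iso S M M id"
  unfolding module_iso_def by simp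

lemma module_iso_comp:
  assumes "module_iso S M N f" "module_iso S N P g"
  shows "module_iso S M P (g \<circ> f)"
proof -
  have "bij_betw f (carrier M) (carrier N)" "bij_betw g (carrier N) (carrier P)"
    using assms unfolding module_iso_def by auto
  moreover from this(1) have "\<And>x. x \<in> carrier M \<Longrightarrow> f x \<in> carrier N" using bij_betwE by blast
  ultimately show ?thesis
    using assms unfolding module_iso_def by (auto intro: bij_betw_trans)
qed

lemma module_iso_inv:
  assumes iso: "module_iso S M N f"
    and add_closed: "\<And>x y. x \<in> carrier M \<Longrightarrow> y \<in> carrier M \<Longrightarrow> x \<oplus>\<^bsub>M\<^esub> y \<in> carrier M"
    and smult_closed: "\<And>a x. a \<in> S \<Longrightarrow> x \<in> carrier M \<Longrightarrow> a \<odot>\<^bsub>M\<^esub> x \<in> carrier M"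
  shows "module_iso S N M (the_inv_into (carrier M) f)"
proof -
  let ?g = "the_inv_into (carrier M) f"
  have bij: "bij_betw f (carrier M) (carrier N)" using iso unfolding module_iso_def by auto
  then have im: "carrier N = f ` carrier M" by (simp add: bij_betw_def)
  have gf: "\<And>x. x \<in> carrier M \<Longrightarrow> ?g (f x) = x"
    using bij by (simp add: bij_betw_def the_inv_into_f_f)
  show ?thesis unfolding module_iso_def
  proof (intro conjI ballI)
    show "bij_betw ?g (carrier N) (carrier M)" using bij_betw_the_inv_into[OF bij] .
    fix x y assume "x \<in> carrier N" "y \<in> carrier N"
    then obtain x' y' where "x' \<in> carrier M" "y' \<in> carrier M" "x = f x'" "y = f y'"
      unfolding im by blast
    then show "?g (x \<oplus>\<^bsub>N\<^esub> y) = ?g x \<oplus>\<^bsub>M\<^esub> ?g y"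
      using iso gf add_closed unfolding module_iso_def by metis
  next
    fix a x assume "a \<in> S" "x \<in> carrier N"
    then obtain x' where "x' \<in> carrier M" "x = f x'" unfolding im by blast
    then show "?g (a \<odot>\<^bsub>N\<^esub> x) = a \<odot>\<^bsub>M\<^esub> ?g x"
      using iso gf smult_closed \<open>a \<in> S\<close> unfolding module_iso_def by metis
  qed
qed

lemma module_iso_restrict_scalars:
  "module_iso S M N f \<Longrightarrow> \<phi> ` S' \<subseteq> S \<Longrightarrow>
    module_iso S' (restrict_scalars \<phi> M) (restrict_scalars \<phi> N) f"
  unfolding module_iso_def restrict_scalars_def by (auto simp: image_subset_iff)

lemma module_iso_module_inv:
  assumes "module (subring_ring G) M" "module_iso G M N f"
  shows "module_iso G N M (the_inv_into (carrier M) f)"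
proof -
  interpret module "subring_ring G" M by (fact assms(1))
  show ?thesis
    using module_iso_inv[OF assms(2)] a_closed smult_closed unfolding subring_ring_simps by blast
qed

lemma equiv_Gamma_iso_rel:
  assumes "\<And>X. X \<in> S \<Longrightarrow> module (subring_ring G) X"
  shows "equiv S (Gamma_iso_rel G S)"
proof (rule equivI)
  show "Gamma_iso_rel G S \<subseteq> S \<times> S" unfolding Gamma_iso_rel_def by auto
  show "refl_on S (Gamma_iso_rel G S)"
    unfolding refl_on_def Gamma_iso_rel_def using module_iso_id by blast
  show "sym (Gamma_iso_rel G S)"
    unfolding sym_def Gamma_iso_rel_def using assms module_iso_module_inv by blast
  show "trans (Gamma_iso_rel G S)"
    unfolding trans_def Gamma_iso_rel_def using module_iso_comp by blast
qed

definition transport_module :: "('r, 'm) module \<Rightarrow> ('m \<Rightarrow> 'c) \<Rightarrow> ('r, 'c) module" where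
  "transport_module M e =
    (let d = the_inv_into (carrier M) e
     in \<lparr>carrier = e ` carrier M, monoid.mult = (\<lambda>_ _. e \<zero>\<^bsub>M\<^esub>), one = e \<zero>\<^bsub>M\<^esub>,
         zero = e \<zero>\<^bsub>M\<^esub>, add = (\<lambda>a b. e (d a \<oplus>\<^bsub>M\<^esub> d b)),
         module.smult = (\<lambda>r a. e (r \<odot>\<^bsub>M\<^esub> d a))\<rparr>)"

lemma transport_module_add:
  "inj_on e (carrier M) \<Longrightarrow> x \<in> carrier M \<Longrightarrow> y \<in> carrier M \<Longrightarrow>
    e x \<oplus>\<^bsub>transport_module M e\<^esub> e y = e (x \<oplus>\<^bsub>M\<^esub> y)"
  by (simp add: transport_module_def Let_def the_inv_into_f_f)

lemma transport_module_smult: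
  "inj_on e (carrier M) \<Longrightarrow> x \<in> carrier M \<Longrightarrow>
    a \<odot>\<^bsub>transport_module M e\<^esub> e x = e (a \<odot>\<^bsub>M\<^esub> x)"
  by (simp add: transport_module_def Let_def the_inv_into_f_f)

lemma transport_module_simps:
  "carrier (transport_module M e) = e ` carrier M" "\<zero>\<^bsub>transport_module M e\<^esub> = e \<zero>\<^bsub>M\<^esub>"
  by (simp_all add: transport_module_def Let_def)

lemma module_iso_transport_module:
  "inj_on e (carrier M) \<Longrightarrow> module_iso S M (transport_module M e) e"
  unfolding module_iso_def
  by (simp add: transport_module_simps transport_module_add transport_module_smult bij_betw_def)

lemma module_transport_module:
  assumes M: "module R M" and inj: "inj_on e (carrier M)"
  shows "module R (transport_module M e)"
proof -
  interpret M: module R M by (rule M)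
  let ?T = "transport_module M e"
  have carrier: "carrier ?T = e ` carrier M" by (simp add: transport_module_simps)
  note add = transport_module_add[OF inj] and smult = transport_module_smult[OF inj]
  note zero = transport_module_simps(2)
  show ?thesis
  proof (rule moduleI)
    show "abelian_group ?T"
    proof (rule abelian_groupI)
      fix x y assume "x \<in> carrier ?T" "y \<in> carrier ?T"
      then show "x \<oplus>\<^bsub>?T\<^esub> y \<in> carrier ?T" "x \<oplus>\<^bsub>?T\<^esub> y = y \<oplus>\<^bsub>?T\<^esub> x"
        unfolding carrier by (auto simp: add M.a_comm)
    next
      fix x y w assume "x \<in> carrier ?T" "y \<in> carrier ?T" "w \<in> carrier ?T"
      then show "x \<oplus>\<^bsub>?T\<^esub> y \<oplus>\<^bsub>?T\<^esub> w = x \<oplus>\<^bsub>?T\<^esub> (y \<oplus>\<^bsub>?T\<^esub> w)"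
        unfolding carrier by (auto simp: add M.a_assoc)
    next
      fix x assume "x \<in> carrier ?T"
      then obtain x' where x': "x' \<in> carrier M" "x = e x'" unfolding carrier by blast
      then show "\<zero>\<^bsub>?T\<^esub> \<oplus>\<^bsub>?T\<^esub> x = x" by (simp add: add zero)
      have "e (\<ominus>\<^bsub>M\<^esub> x') \<oplus>\<^bsub>?T\<^esub> x = \<zero>\<^bsub>?T\<^esub>" using x' by (simp add: add zero M.l_neg)
      then show "\<exists>v\<in>carrier ?T. v \<oplus>\<^bsub>?T\<^esub> x = \<zero>\<^bsub>?T\<^esub>" using x' carrier by auto
    qed (simp add: carrier zero)
  next
    fix a b x y assume "a \<in> carrier R" "b \<in> carrier R" "x \<in> carrier ?T" "y \<in> carrier ?T"
    then show "(a \<oplus>\<^bsub>R\<^esub> b) \<odot>\<^bsub>?T\<^esub> x = a \<odot>\<^bsub>?T\<^esub> x \<oplus>\<^bsub>?T\<^esub> b \<odot>\<^bsub>?T\<^esub> x"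
      "a \<odot>\<^bsub>?T\<^esub> (x \<oplus>\<^bsub>?T\<^esub> y) = a \<odot>\<^bsub>?T\<^esub> x \<oplus>\<^bsub>?T\<^esub> a \<odot>\<^bsub>?T\<^esub> y"
      "(a \<otimes>\<^bsub>R\<^esub> b) \<odot>\<^bsub>?T\<^esub> x = a \<odot>\<^bsub>?T\<^esub> (b \<odot>\<^bsub>?T\<^esub> x)"
      unfolding carrier by (auto simp: add smult M.smult_l_distr M.smult_r_distr M.smult_assoc1)
  next
    fix a x assume "a \<in> carrier R" "x \<in> carrier ?T"
    then show "a \<odot>\<^bsub>?T\<^esub> x \<in> carrier ?T" unfolding carrier by (auto simp: smult)
  next
    fix x assume "x \<in> carrier ?T"
    then show "\<one>\<^bsub>R\<^esub> \<odot>\<^bsub>?T\<^esub> x = x" unfolding carrier by (auto simp: smult)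
  qed (rule M.is_cring)
qed

lemma inj_vec_to_nat:
  assumes "number_field_type TYPE('a::field_char_0)"
  obtains enc :: "'a::field_char_0 vec \<Rightarrow> nat" where "inj enc"
proof -
  obtain B :: "'a set" where B: "finite B" "\<forall>x::'a. \<exists>c. x = (\<Sum>b\<in>B. of_rat (c b) * b)"
    using assms unfolding number_field_type_def by blast
  obtain bs where bs: "set bs = B" using finite_list[OF B(1)] by blast
  obtain C where C: "\<And>x. x = (\<Sum>b\<in>B. of_rat (C x b) * b)"
    using B(2) choice[of "\<lambda>x c. x = (\<Sum>b\<in>B. of_rat (c b) * b)"] by blast
  define coords where "coords x = map (C x) bs" for x
  have "inj coords"
  proof (rule injI)
    fix x y assume "coords x = coords y"
    then have "\<forall>b\<in>B. C x b = C y b" unfolding coords_def using bs by (metis map_eq_conv)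
    then have "(\<Sum>b\<in>B. of_rat (C x b) * b) = (\<Sum>b\<in>B. of_rat (C y b) * b)" by simp
    then show "x = y" using C[of x] C[of y] by simp
  qed
  have "inj (\<lambda>v. to_nat (map coords (list_of_vec v)))"
  proof (rule injI)
    fix v w :: "'a vec"
    assume "to_nat (map coords (list_of_vec v)) = to_nat (map coords (list_of_vec w))"
    then have "list_of_vec v = list_of_vec w" using \<open>inj coords\<close> by simp
    then show "v = w" by (metis vec_list)
  qed
  then show thesis by (rule that)
qed

lemma equiv_pullback:
  assumes RA: "R \<subseteq> A \<times> A" and eqB: "equiv B S" and FB: "\<And>a. a \<in> A \<Longrightarrow> F a \<in> B"
    and RS: "\<And>a a'. a \<in> A \<Longrightarrow> a' \<in> A \<Longrightarrow> (a, a') \<in> R \<longleftrightarrow> (F a, F a') \<in> S"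
  shows "equiv A R"
proof (rule equivI)
  show "refl_on A R"
  proof (rule refl_onI)
    fix a assume a: "a \<in> A"
    then have "(F a, F a) \<in> S" using eqB FB by (meson equivE refl_onD)
    then show "(a, a) \<in> R" using RS a by blast
  qed
  show "sym R"
  proof (rule symI)
    fix a b assume ab: "(a, b) \<in> R"
    then have "a \<in> A" "b \<in> A" using RA by auto
    moreover from this ab have "(F b, F a) \<in> S" using RS eqB by (meson equivE symD)
    ultimately show "(b, a) \<in> R" using RS by blast
  qed
  show "trans R"
  proof (rule transI)
    fix a b c assume ab: "(a, b) \<in> R" and bc: "(b, c) \<in> R"
    then have abc: "a \<in> A" "b \<in> A" "c \<in> A" using RA by auto
    with ab bc have "(F a, F b) \<in> S" "(F b, F c) \<in> S" using RS by blast+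
    then have "(F a, F c) \<in> S" using eqB by (meson equivE transD)
    then show "(a, c) \<in> R" using RS abc by blast
  qed
qed (fact RA)

lemma bij_betw_quotients:
  assumes RA: "R \<subseteq> A \<times> A" and eqB: "equiv B S" and FB: "\<And>a. a \<in> A \<Longrightarrow> F a \<in> B"
    and RS: "\<And>a a'. a \<in> A \<Longrightarrow> a' \<in> A \<Longrightarrow> (a, a') \<in> R \<longleftrightarrow> (F a, F a') \<in> S"
    and onto: "\<And>b. b \<in> B \<Longrightarrow> \<exists>a\<in>A. (F a, b) \<in> S"
  shows "\<exists>f. bij_betw f (A // R) (B // S)"
proof -
  have eqA: "equiv A R" using equiv_pullback[OF RA eqB FB RS] .
  define f where "f Q = S `` {F (SOME a. a \<in> Q)}" for Q
  have f_class: "f (R `` {a}) = S `` {F a}" if a: "a \<in> A" for a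
  proof -
    let ?s = "SOME x. x \<in> R `` {a}"
    have "?s \<in> R `` {a}" using a eqA by (metis equiv_class_self someI_ex)
    then have "(F a, F ?s) \<in> S" using RS RA a by blast
    then show ?thesis unfolding f_def using eqB by (metis equiv_class_eq_iff)
  qed
  have "inj_on f (A // R)"
  proof (rule inj_onI)
    fix Q1 Q2 assume "Q1 \<in> A // R" "Q2 \<in> A // R" "f Q1 = f Q2"
    then obtain a1 a2 where a: "a1 \<in> A" "Q1 = R `` {a1}" "a2 \<in> A" "Q2 = R `` {a2}"
      "S `` {F a1} = S `` {F a2}"
      using f_class by (auto elim!: quotientE)
    then have "(a1, a2) \<in> R" using RS FB eqB by (metis eq_equiv_class_iff)
    then show "Q1 = Q2" using a eqA by (metis equiv_class_eq_iff)
  qed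
  moreover have "f ` (A // R) = B // S"
  proof
    show "f ` (A // R) \<subseteq> B // S"
    proof
      fix X assume "X \<in> f ` (A // R)"
      then obtain a where "a \<in> A" "X = f (R `` {a})" by (auto elim!: quotientE)
      then show "X \<in> B // S" using f_class FB quotientI by metis
    qed
    show "B // S \<subseteq> f ` (A // R)"
    proof
      fix X assume "X \<in> B // S"
      then obtain b where b: "b \<in> B" "X = S `` {b}" by (rule quotientE) blast
      obtain a where a: "a \<in> A" "(F a, b) \<in> S" using onto[OF b(1)] by blast
      then have "X = f (R `` {a})" using f_class b eqB by (metis equiv_class_eq_iff)
      then show "X \<in> f ` (A // R)" using a(1) by (auto intro: quotientI)
    qed
  qed
  ultimately show ?thesis unfolding bij_betw_def by blast
qed

section \<open>Linear endomorphisms of \<open>S^n\<close> and their matrices\<close>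

definition vecs_over :: "'a::comm_ring_1 set \<Rightarrow> nat \<Rightarrow> 'a vec set" where
  "vecs_over S n = {v \<in> carrier_vec n. \<forall>i<n. v $ i \<in> S}"

lemma vecs_over_carrier: "v \<in> vecs_over S n \<Longrightarrow> v \<in> carrier_vec n"
  unfolding vecs_over_def by simp

lemma
  assumes "is_subring S"
  shows vecs_over_add: "v \<in> vecs_over S n \<Longrightarrow> w \<in> vecs_over S n \<Longrightarrow> v + w \<in> vecs_over S n"
    and vecs_over_smult: "a \<in> S \<Longrightarrow> v \<in> vecs_over S n \<Longrightarrow> a \<cdot>\<^sub>v v \<in> vecs_over S n"
    and vecs_over_uminus: "v \<in> vecs_over S n \<Longrightarrow> - v \<in> vecs_over S n"
    and vecs_over_zero: "0\<^sub>v n \<in> vecs_over S n"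
    and vecs_over_unit_vec: "j < n \<Longrightarrow> unit_vec n j \<in> vecs_over S n"
  using assms unfolding vecs_over_def
  by (auto simp: subring_add subring_mult subring_uminus subring_zero subring_one)

lemma mult_mat_vec_vecs_over:
  assumes S: "is_subring S" and A: "A \<in> carrier_mat n n" "\<forall>i<n. \<forall>j<n. A $$ (i, j) \<in> S"
    and v: "v \<in> vecs_over S n"
  shows "A *\<^sub>v v \<in> vecs_over S n"
proof -
  have "(A *\<^sub>v v) $ i \<in> S" if i: "i < n" for i
  proof -
    have "(A *\<^sub>v v) $ i = (\<Sum>k\<in>{0..<n}. A $$ (i, k) * v $ k)"
      using A i vecs_over_carrier[OF v] by (simp add: scalar_prod_def)
    also have "\<dots> \<in> S" using A v i S unfolding vecs_over_def by (auto intro!: subring_sum subring_mult)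
    finally show ?thesis .
  qed
  then show ?thesis using A vecs_over_carrier[OF v] unfolding vecs_over_def by simp
qed

lemma mat_eq_if_unit_vec:
  fixes A :: "'a::comm_ring_1 mat"
  assumes "A \<in> carrier_mat n n" "B \<in> carrier_mat n n"
    and "\<And>j. j < n \<Longrightarrow> A *\<^sub>v unit_vec n j = B *\<^sub>v unit_vec n j"
  shows "A = B"
proof -
  have col: "(M *\<^sub>v unit_vec n j) $ i = M $$ (i, j)"
    if "M \<in> carrier_mat n n" "i < n" "j < n" for M :: "'a mat" and i j
    using that by (simp add: scalar_prod_def if_distrib sum.delta cong: if_cong)
  show ?thesis
    using assms col[OF assms(1)] col[OF assms(2)] by (intro eq_matI) auto
qed

lemma additive_map_zero_vec:
  fixes T :: "'a::comm_ring_1 vec \<Rightarrow> 'a vec"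
  assumes "T (0\<^sub>v n) \<in> carrier_vec n" "T (0\<^sub>v n + 0\<^sub>v n) = T (0\<^sub>v n) + T (0\<^sub>v n)"
  shows "T (0\<^sub>v n) = 0\<^sub>v n"
proof (rule eq_vecI)
  fix i assume i: "i < dim_vec (0\<^sub>v n :: 'a vec)"
  have "T (0\<^sub>v n) + T (0\<^sub>v n) = T (0\<^sub>v n)" using assms(2) by simp
  then have "(T (0\<^sub>v n) + T (0\<^sub>v n)) $ i = T (0\<^sub>v n) $ i" by (rule arg_cong)
  then show "T (0\<^sub>v n) $ i = 0\<^sub>v n $ i" using assms(1) i by simp
qed (use assms in simp)

lemma vec_eq_if_smult_eq:
  fixes c :: "'a::field"
  assumes "c \<cdot>\<^sub>v x = c \<cdot>\<^sub>v y" "c \<noteq> 0"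
  shows "x = y"
proof -
  have "inverse c \<cdot>\<^sub>v (c \<cdot>\<^sub>v v) = v" for v :: "'a vec"
    using assms(2) by (simp add: smult_smult_assoc)
  then show ?thesis using assms(1) by metis
qed

definition mat_of_map :: "nat \<Rightarrow> ('a::comm_ring_1 vec \<Rightarrow> 'a vec) \<Rightarrow> 'a mat" where
  "mat_of_map n T = mat n n (\<lambda>(i, j). T (unit_vec n j) $ i)"

definition linear_on_vecs :: "'a::comm_ring_1 set \<Rightarrow> nat \<Rightarrow> ('a vec \<Rightarrow> 'a vec) \<Rightarrow> bool" where
  "linear_on_vecs S n T \<longleftrightarrow> (\<forall>v\<in>vecs_over S n. T v \<in> vecs_over S n)
     \<and> (\<forall>v\<in>vecs_over S n. \<forall>w\<in>vecs_over S n. T (v + w) = T v + T w)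
     \<and> (\<forall>b\<in>S. \<forall>v\<in>vecs_over S n. T (b \<cdot>\<^sub>v v) = b \<cdot>\<^sub>v T v)"

lemma mat_of_map_carrier: "mat_of_map n T \<in> carrier_mat n n"
  unfolding mat_of_map_def by simp

lemma mat_of_map_entries:
  assumes "is_subring S" "linear_on_vecs S n T" "i < n" "j < n"
  shows "mat_of_map n T $$ (i, j) \<in> S"
  using assms vecs_over_unit_vec[OF assms(1)]
  unfolding mat_of_map_def linear_on_vecs_def vecs_over_def by simp

lemma mat_of_map_mult_vec:
  assumes S: "is_subring S" and T: "linear_on_vecs S n T" and v: "v \<in> vecs_over S n"
  shows "mat_of_map n T *\<^sub>v v = T v"
proof -
  note vecs = vecs_over_add[OF S] vecs_over_smult[OF S] vecs_over_zero[OF S] vecs_over_unit_vec[OF S]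
  have maps: "\<And>v. v \<in> vecs_over S n \<Longrightarrow> T v \<in> vecs_over S n"
    and add: "\<And>v w. v \<in> vecs_over S n \<Longrightarrow> w \<in> vecs_over S n \<Longrightarrow> T (v + w) = T v + T w"
    and smult: "\<And>b v. b \<in> S \<Longrightarrow> v \<in> vecs_over S n \<Longrightarrow> T (b \<cdot>\<^sub>v v) = b \<cdot>\<^sub>v T v"
    using T unfolding linear_on_vecs_def by blast+
  have Tu: "T (unit_vec n j) \<in> carrier_vec n" if "j < n" for j
    using vecs_over_carrier[OF maps[OF vecs(4)[OF that]]] .
  have v_entries: "v \<in> carrier_vec n" "\<And>i. i < n \<Longrightarrow> v $ i \<in> S"
    using v unfolding vecs_over_def by auto
  define tr where "tr k = vec n (\<lambda>i. if i < k then v $ i else 0)" for k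
  have tr: "tr k \<in> vecs_over S n" for k
    using v_entries S unfolding tr_def vecs_over_def by (auto simp: subring_zero)
  have "T (tr k) = vec n (\<lambda>i. \<Sum>j<k. T (unit_vec n j) $ i * v $ j)" if "k \<le> n" for k
    using that
  proof (induction k)
    case 0
    have "tr 0 = 0\<^sub>v n" unfolding tr_def by auto
    moreover have "T (0\<^sub>v n) = 0\<^sub>v n"
      using vecs_over_carrier[OF maps[OF vecs(3)]] add[OF vecs(3) vecs(3)] by (rule additive_map_zero_vec)
    ultimately show ?case by (auto intro!: eq_vecI)
  next
    case (Suc k)
    then have k: "k < n" by simp
    have "tr (Suc k) = tr k + v $ k \<cdot>\<^sub>v unit_vec n k"
      unfolding tr_def using k by (intro eq_vecI) (auto simp: less_Suc_eq)
    then have "T (tr (Suc k)) = T (tr k) + v $ k \<cdot>\<^sub>v T (unit_vec n k)"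
      using add[OF tr vecs(2)] smult v_entries(2) k vecs(4) by simp
    then show ?case
      using Suc.IH k Tu[OF k] by (auto intro!: eq_vecI simp: mult.commute)
  qed
  moreover have "tr n = v" unfolding tr_def using v_entries by (intro eq_vecI) auto
  ultimately have "T v = vec n (\<lambda>i. \<Sum>j<n. T (unit_vec n j) $ i * v $ j)" by auto
  then show ?thesis
    using v_entries unfolding mat_of_map_def
    by (intro eq_vecI) (auto simp: scalar_prod_def atLeast0LessThan)
qed

text \<open>Linearity for the scalars \<open>z S\<close> upgrades to \<open>S\<close>-linearity because \<open>S^n\<close> has no \<open>z\<close>-torsion.\<close>
lemma linear_on_vecs_if_multiples:
  fixes S :: "'a::field_char_0 set" and z :: int
  assumes S: "is_subring S" and z: "z > 0"
    and maps: "\<And>v. v \<in> vecs_over S n \<Longrightarrow> T v \<in> vecs_over S n"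
    and add: "\<And>v w. v \<in> vecs_over S n \<Longrightarrow> w \<in> vecs_over S n \<Longrightarrow> T (v + w) = T v + T w"
    and zlin: "\<And>b v. b \<in> S \<Longrightarrow> v \<in> vecs_over S n \<Longrightarrow>
      T ((of_int z * b) \<cdot>\<^sub>v v) = (of_int z * b) \<cdot>\<^sub>v T v"
  shows "linear_on_vecs S n T"
proof -
  have nat_mult: "T (of_nat m \<cdot>\<^sub>v u) = of_nat m \<cdot>\<^sub>v T u" if u: "u \<in> vecs_over S n" for m u
  proof (induction m)
    case 0
    have "T (0\<^sub>v n) = 0\<^sub>v n"
      using vecs_over_carrier[OF maps[OF vecs_over_zero[OF S]]] add[OF vecs_over_zero[OF S] vecs_over_zero[OF S]]
      by (rule additive_map_zero_vec)
    moreover have "0 \<cdot>\<^sub>v u = 0\<^sub>v n" "0 \<cdot>\<^sub>v T u = 0\<^sub>v n"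
      using vecs_over_carrier[OF u] vecs_over_carrier[OF maps[OF u]] by auto
    ultimately show ?case by simp
  next
    case (Suc m)
    have "of_nat (Suc m) \<cdot>\<^sub>v u = u + of_nat m \<cdot>\<^sub>v u"
      using vecs_over_carrier[OF u] by (simp add: add_smult_distrib_vec)
    moreover have "of_nat m \<cdot>\<^sub>v u \<in> vecs_over S n"
      using vecs_over_smult[OF S subring_of_int[OF S, of "int m"] u] by simp
    ultimately show ?case
      using Suc add[OF u] vecs_over_carrier[OF maps[OF u]] by (simp add: add_smult_distrib_vec)
  qed
  have "T (b \<cdot>\<^sub>v v) = b \<cdot>\<^sub>v T v" if b: "b \<in> S" and v: "v \<in> vecs_over S n" for b v
  proof -
    have bv: "b \<cdot>\<^sub>v v \<in> vecs_over S n" using vecs_over_smult[OF S b v] .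
    have "of_int z \<cdot>\<^sub>v T (b \<cdot>\<^sub>v v) = T (of_int z \<cdot>\<^sub>v (b \<cdot>\<^sub>v v))"
      using nat_mult[OF bv, of "nat z"] z by simp
    also have "\<dots> = of_int z \<cdot>\<^sub>v (b \<cdot>\<^sub>v T v)"
      using zlin[OF b v] by (simp add: smult_smult_assoc)
    finally show ?thesis by (rule vec_eq_if_smult_eq) (use z in simp)
  qed
  then show ?thesis using maps add unfolding linear_on_vecs_def by blast
qed

lemma mat_of_map_mult_inverse:
  assumes S: "is_subring S" and T: "linear_on_vecs S n T" and T': "linear_on_vecs S n T'"
    and inverse: "\<And>v. v \<in> vecs_over S n \<Longrightarrow> T (T' v) = v"
  shows "mat_of_map n T * mat_of_map n T' = 1\<^sub>m n"
proof (rule mat_eq_if_unit_vec[OF mult_carrier_mat[OF mat_of_map_carrier mat_of_map_carrier] one_carrier_mat])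
  fix j assume "j < n"
  then have e: "unit_vec n j \<in> vecs_over S n" by (rule vecs_over_unit_vec[OF S])
  moreover from this have "T' (unit_vec n j) \<in> vecs_over S n" using T' unfolding linear_on_vecs_def by blast
  ultimately show "(mat_of_map n T * mat_of_map n T') *\<^sub>v unit_vec n j = 1\<^sub>m n *\<^sub>v unit_vec n j"
    using inverse mat_of_map_mult_vec[OF S T] mat_of_map_mult_vec[OF S T']
      assoc_mult_mat_vec[OF mat_of_map_carrier mat_of_map_carrier vecs_over_carrier[OF e]]
    by simp
qed

section \<open>Ring morphisms into matrices and their rational extension\<close>

lemma smult_smult_mat: "c \<cdot>\<^sub>m (d \<cdot>\<^sub>m A) = (c * d :: 'a::comm_ring_1) \<cdot>\<^sub>m A"
  by (intro eq_matI) auto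

lemma smult_mat_mult_vec:
  fixes A :: "'a::comm_ring_1 mat"
  assumes "A \<in> carrier_mat n n" "v \<in> carrier_vec n"
  shows "(a \<cdot>\<^sub>m A) *\<^sub>v v = a \<cdot>\<^sub>v (A *\<^sub>v v)"
  using assms by (intro eq_vecI) (auto simp: scalar_prod_def sum_distrib_left mult.assoc)

lemma ring_hom_GR_carrier: "ring_hom_GR G K n \<rho> \<Longrightarrow> x \<in> G \<Longrightarrow> \<rho> x \<in> carrier_mat n n"
  unfolding ring_hom_GR_def matR_def by auto

lemma ring_hom_GR_of_int_mult:
  assumes G: "is_subring G" and \<rho>: "ring_hom_GR G K n \<rho>" and x: "x \<in> G"
  shows "\<rho> (of_int k * x) = of_int k \<cdot>\<^sub>m \<rho> x"
proof (rule eq_matI)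
  have dims: "dim_row (\<rho> a) = n" "dim_col (\<rho> a) = n" if "a \<in> G" for a
    using ring_hom_GR_carrier[OF \<rho> that] by auto
  fix i j assume ij: "i < dim_row (of_int k \<cdot>\<^sub>m \<rho> x)" "j < dim_col (of_int k \<cdot>\<^sub>m \<rho> x)"
  then have "i < n" "j < n" using dims[OF x] by auto
  then have "(\<lambda>y. \<rho> y $$ (i, j)) (of_int k * x) = of_int k * (\<lambda>y. \<rho> y $$ (i, j)) x"
    using \<rho> unfolding ring_hom_GR_def
    by (intro additive_of_int_mult[OF G x]) (simp add: dims)
  then show "\<rho> (of_int k * x) $$ (i, j) = (of_int k \<cdot>\<^sub>m \<rho> x) $$ (i, j)" using ij by simp
qed (use ring_hom_GR_carrier[OF \<rho>] subring_of_int_mult[OF G x] x in auto)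

text \<open>\<open>rho_Q\<close> picks its denominator with \<open>SOME\<close>; any other denominator gives the same value.\<close>
lemma rho_Q_eq:
  assumes G: "is_order G" and \<rho>: "ring_hom_GR G K n \<rho>" and m: "m \<noteq> 0" "of_int m * x \<in> G"
  shows "rho_Q G \<rho> x = (1 / of_int m) \<cdot>\<^sub>m \<rho> (of_int m * x)"
proof -
  define m' where "m' = (SOME m::int. m \<noteq> 0 \<and> of_int m * x \<in> G)"
  have m': "m' \<noteq> 0" "of_int m' * x \<in> G"
    unfolding m'_def using someI_ex[OF order_denominator[OF G]] by auto
  have "of_int m \<cdot>\<^sub>m \<rho> (of_int m' * x) = \<rho> (of_int m * (of_int m' * x))"
    using ring_hom_GR_of_int_mult[OF order_subring[OF G] \<rho> m'(2)] by simp
  also have "\<dots> = of_int m' \<cdot>\<^sub>m \<rho> (of_int m * x)"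
    using ring_hom_GR_of_int_mult[OF order_subring[OF G] \<rho> m(2), of m'] by (simp add: mult.left_commute)
  finally have eq: "of_int m \<cdot>\<^sub>m \<rho> (of_int m' * x) = of_int m' \<cdot>\<^sub>m \<rho> (of_int m * x)" .
  have "(1 / of_int m') \<cdot>\<^sub>m \<rho> (of_int m' * x)
      = (1 / (of_int m * of_int m')) \<cdot>\<^sub>m (of_int m \<cdot>\<^sub>m \<rho> (of_int m' * x))"
    using m(1) by (simp add: smult_smult_mat)
  also have "\<dots> = (1 / of_int m) \<cdot>\<^sub>m \<rho> (of_int m * x)"
    unfolding eq using m'(1) by (simp add: smult_smult_mat)
  finally show ?thesis unfolding rho_Q_def m'_def Let_def .
qed

lemma rho_Q_of_mem:
  assumes "is_order G" "ring_hom_GR G K n \<rho>" "x \<in> G"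
  shows "rho_Q G \<rho> x = \<rho> x"
proof -
  have "(1::'a) \<cdot>\<^sub>m \<rho> x = \<rho> x" using ring_hom_GR_carrier[OF assms(2,3)] by (intro eq_matI) auto
  then show ?thesis using rho_Q_eq[OF assms(1,2), of 1 x] assms(3) by simp
qed

lemma rho_Q_one:
  assumes "is_order G" "ring_hom_GR G K n \<rho>"
  shows "rho_Q G \<rho> 1 = 1\<^sub>m n"
  using rho_Q_of_mem[OF assms subring_one[OF order_subring[OF assms(1)]]] assms(2)
  unfolding ring_hom_GR_def by simp

lemma rho_Q_matK:
  assumes G: "is_order G" and K: "is_subfield K" and \<rho>: "ring_hom_GR G K n \<rho>"
  shows "rho_Q G \<rho> x \<in> matK K n"
proof -
  obtain m :: int where m: "m \<noteq> 0" "of_int m * x \<in> G" using order_denominator[OF G] by blast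
  have "1 / of_int m \<in> K"
    using subfield_inverse[OF K subring_of_int[OF subfield_is_subring[OF K]]] by (simp add: divide_inverse)
  moreover have "\<rho> (of_int m * x) \<in> matR K n" using \<rho> m(2) unfolding ring_hom_GR_def by blast
  ultimately show ?thesis
    unfolding rho_Q_eq[OF G \<rho> m] matK_def matR_def ring_of_integers_def
    using subring_mult[OF subfield_is_subring[OF K], of "1 / of_int m"] by (auto simp del: divide_const_simps)
qed

lemma rho_Q_add:
  assumes G: "is_order G" and \<rho>: "ring_hom_GR G K n \<rho>"
  shows "rho_Q G \<rho> (x + y) = rho_Q G \<rho> x + rho_Q G \<rho> y"
proof -
  obtain m :: int where m: "m \<noteq> 0" "of_int m * x \<in> G" "of_int m * y \<in> G"
    using order_common_denominator[OF G] .
  then have "of_int m * (x + y) \<in> G"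
    using subring_add[OF order_subring[OF G]] by (simp add: distrib_left)
  then have "rho_Q G \<rho> (x + y) = (1 / of_int m) \<cdot>\<^sub>m (\<rho> (of_int m * x) + \<rho> (of_int m * y))"
    using rho_Q_eq[OF G \<rho> m(1)] \<rho> m unfolding ring_hom_GR_def by (simp add: distrib_left)
  also have "\<dots> = rho_Q G \<rho> x + rho_Q G \<rho> y"
    unfolding rho_Q_eq[OF G \<rho> m(1,2)] rho_Q_eq[OF G \<rho> m(1,3)]
    using add_smult_distrib_left_mat[OF ring_hom_GR_carrier[OF \<rho> m(2)] ring_hom_GR_carrier[OF \<rho> m(3)]] .
  finally show ?thesis .
qed

lemma rho_Q_mult:
  assumes G: "is_order G" and \<rho>: "ring_hom_GR G K n \<rho>"
  shows "rho_Q G \<rho> (x * y) = rho_Q G \<rho> x * rho_Q G \<rho> y"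
proof -
  obtain m :: int where m: "m \<noteq> 0" "of_int m * x \<in> G" "of_int m * y \<in> G"
    using order_common_denominator[OF G] .
  let ?A = "\<rho> (of_int m * x)" and ?B = "\<rho> (of_int m * y)"
  have A: "?A \<in> carrier_mat n n" and B: "?B \<in> carrier_mat n n"
    using ring_hom_GR_carrier[OF \<rho>] m by auto
  have xy: "of_int (m * m) * (x * y) = (of_int m * x) * (of_int m * y)" by (simp add: algebra_simps)
  then have "of_int (m * m) * (x * y) \<in> G" using subring_mult[OF order_subring[OF G]] m by metis
  then have "rho_Q G \<rho> (x * y) = (1 / of_int (m * m)) \<cdot>\<^sub>m \<rho> (of_int (m * m) * (x * y))"
    using m(1) by (intro rho_Q_eq[OF G \<rho>]) simp_all
  also have "\<dots> = (1 / of_int (m * m)) \<cdot>\<^sub>m (?A * ?B)"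
    using \<rho> m unfolding xy ring_hom_GR_def by simp
  also have "\<dots> = ((1 / of_int m) \<cdot>\<^sub>m ?A) * ((1 / of_int m) \<cdot>\<^sub>m ?B)"
    by (simp add: mult_smult_assoc_mat[OF A smult_carrier_mat[OF B]] mult_smult_distrib[OF A B]
        smult_smult_mat)
  also have "\<dots> = rho_Q G \<rho> x * rho_Q G \<rho> y"
    using rho_Q_eq[OF G \<rho> m(1,2)] rho_Q_eq[OF G \<rho> m(1,3)] by simp
  finally show ?thesis .
qed

definition rep_module :: "'a::field_char_0 set \<Rightarrow> nat \<Rightarrow> ('a \<Rightarrow> 'a mat) \<Rightarrow> ('a, 'a vec) module" where
  "rep_module K n \<rho> = \<lparr>carrier = vecs_over (ring_of_integers K) n, monoid.mult = (\<lambda>_ _. 0\<^sub>v n),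
     one = 0\<^sub>v n, zero = 0\<^sub>v n, add = (+), module.smult = (\<lambda>g v. \<rho> g *\<^sub>v v)\<rparr>"

lemma rep_module_simps:
  "carrier (rep_module K n \<rho>) = vecs_over (ring_of_integers K) n" "add (rep_module K n \<rho>) = (+)"
  "module.smult (rep_module K n \<rho>) = (\<lambda>g v. \<rho> g *\<^sub>v v)" "zero (rep_module K n \<rho>) = 0\<^sub>v n"
  unfolding rep_module_def by simp_all

lemma OKn_module_simps:
  "carrier (OKn_module K n) = vecs_over (ring_of_integers K) n" "add (OKn_module K n) = (+)"
  "module.smult (OKn_module K n) = (\<lambda>a v. a \<cdot>\<^sub>v v)"
  unfolding OKn_module_def vecs_over_def by simp_all

lemma matR_mult_vec:
  assumes "is_subfield K" "A \<in> matR K n" "v \<in> vecs_over (ring_of_integers K) n"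
  shows "A *\<^sub>v v \<in> vecs_over (ring_of_integers K) n"
  using assms mult_mat_vec_vecs_over[OF ring_of_integers_subring] unfolding matR_def by blast

lemma module_rep_module:
  assumes G: "is_order G" and K: "is_subfield K" and \<rho>: "ring_hom_GR G K n \<rho>"
  shows "module (subring_ring G) (rep_module K n \<rho>)"
proof -
  note OK = ring_of_integers_subring[OF K]
  note carrier = ring_hom_GR_carrier[OF \<rho>] vecs_over_carrier
  have hom: "\<rho> 1 = 1\<^sub>m n" "\<And>a b. a \<in> G \<Longrightarrow> b \<in> G \<Longrightarrow> \<rho> (a + b) = \<rho> a + \<rho> b"
    "\<And>a b. a \<in> G \<Longrightarrow> b \<in> G \<Longrightarrow> \<rho> (a * b) = \<rho> a * \<rho> b"
    using \<rho> unfolding ring_hom_GR_def by auto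
  show ?thesis
  proof (rule moduleI)
    show "cring (subring_ring G)" using cring_subring_ring[OF order_subring[OF G]] .
    show "abelian_group (rep_module K n \<rho>)"
    proof (rule abelian_groupI)
      fix x assume "x \<in> carrier (rep_module K n \<rho>)"
      then show "\<exists>y\<in>carrier (rep_module K n \<rho>). y \<oplus>\<^bsub>rep_module K n \<rho>\<^esub> x = \<zero>\<^bsub>rep_module K n \<rho>\<^esub>"
        using vecs_over_uminus[OF OK] vecs_over_carrier unfolding rep_module_simps by force
    qed (auto simp: rep_module_simps vecs_over_add[OF OK] vecs_over_zero[OF OK]
        dest: vecs_over_carrier intro: comm_add_vec assoc_add_vec)
  next
    fix a x assume "a \<in> carrier (subring_ring G)" "x \<in> carrier (rep_module K n \<rho>)"
    then show "a \<odot>\<^bsub>rep_module K n \<rho>\<^esub> x \<in> carrier (rep_module K n \<rho>)"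
      using matR_mult_vec[OF K] \<rho> unfolding rep_module_simps subring_ring_simps ring_hom_GR_def by auto
  next
    fix a b x assume "a \<in> carrier (subring_ring G)" "b \<in> carrier (subring_ring G)"
      "x \<in> carrier (rep_module K n \<rho>)"
    then show "(a \<oplus>\<^bsub>subring_ring G\<^esub> b) \<odot>\<^bsub>rep_module K n \<rho>\<^esub> x
        = a \<odot>\<^bsub>rep_module K n \<rho>\<^esub> x \<oplus>\<^bsub>rep_module K n \<rho>\<^esub> b \<odot>\<^bsub>rep_module K n \<rho>\<^esub> x"
      and "(a \<otimes>\<^bsub>subring_ring G\<^esub> b) \<odot>\<^bsub>rep_module K n \<rho>\<^esub> x
        = a \<odot>\<^bsub>rep_module K n \<rho>\<^esub> (b \<odot>\<^bsub>rep_module K n \<rho>\<^esub> x)"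
      unfolding rep_module_simps subring_ring_simps
      using hom carrier add_mult_distrib_mat_vec assoc_mult_mat_vec by metis+
  next
    fix a x y assume "a \<in> carrier (subring_ring G)" "x \<in> carrier (rep_module K n \<rho>)"
      "y \<in> carrier (rep_module K n \<rho>)"
    then show "a \<odot>\<^bsub>rep_module K n \<rho>\<^esub> (x \<oplus>\<^bsub>rep_module K n \<rho>\<^esub> y)
        = a \<odot>\<^bsub>rep_module K n \<rho>\<^esub> x \<oplus>\<^bsub>rep_module K n \<rho>\<^esub> a \<odot>\<^bsub>rep_module K n \<rho>\<^esub> y"
      unfolding rep_module_simps subring_ring_simps using carrier mult_add_distrib_mat_vec by metis
  next
    fix x assume "x \<in> carrier (rep_module K n \<rho>)"
    then have "x \<in> carrier_vec n" unfolding rep_module_simps by (rule vecs_over_carrier)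
    then show "\<one>\<^bsub>subring_ring G\<^esub> \<odot>\<^bsub>rep_module K n \<rho>\<^esub> x = x"
      unfolding rep_module_simps subring_ring_simps using hom(1) by simp
  qed
qed

section \<open>\<open>\<phi>\<close>-compatible representations and their modules\<close>

locale phi_order =
  fixes G K :: "'a::field_char_0 set" and \<phi> :: "'a \<Rightarrow> 'a" and z :: int
  assumes order: "is_order G" and subfield: "is_subfield K" and morphism: "ring_morphism_on K \<phi>"
    and z_pos: "z > 0" and z_image: "(\<lambda>a. \<phi> (of_int z * a)) ` ring_of_integers K \<subseteq> G"
begin

abbreviation OK where "OK \<equiv> ring_of_integers K"
abbreviation O' where "O' \<equiv> O_prime K z"

lemma G_subring: "is_subring G"
  using order_subring[OF order] .

lemma OK_subring: "is_subring OK"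
  using ring_of_integers_subring[OF subfield] .

lemma phi_O_prime: "a \<in> O' \<Longrightarrow> \<phi> a \<in> G"
  using ring_morphism_on_O_prime[OF subfield morphism G_subring z_image] by blast

lemma O_prime_K: "a \<in> O' \<Longrightarrow> a \<in> K"
  using O_prime_subset_ring_of_integers[OF subfield] unfolding ring_of_integers_def by blast

text \<open>Clearing the denominator of \<open>k\<close> turns \<open>\<phi> k\<close> into \<open>\<phi>\<close> of an element of \<open>O'\<close>, on which
  \<open>\<rho>\<close> acts by scalars.\<close>
lemma rho_Q_scalar:
  assumes \<rho>: "ring_hom_GR G K n \<rho>" and scalar: "\<And>a. a \<in> O' \<Longrightarrow> \<rho> (\<phi> a) = a \<cdot>\<^sub>m 1\<^sub>m n"
    and k: "k \<in> K"
  shows "rho_Q G \<rho> (\<phi> k * x) = k \<cdot>\<^sub>m rho_Q G \<rho> x"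
proof -
  obtain N :: int where N: "N \<noteq> 0" "of_int N * k \<in> OK"
    using ring_of_integers_denominator[OF order subfield k] by blast
  obtain m :: int where m: "m \<noteq> 0" "of_int m * x \<in> G" using order_denominator[OF order] by blast
  define a where "a = of_int z * (of_int N * k)"
  have a: "a \<in> O'" unfolding a_def using O_prime_multiple[OF N(2)] .
  have "a = of_int (z * N) * k" unfolding a_def by (simp add: mult.assoc)
  then have "\<phi> a = \<phi> (of_int (z * N)) * \<phi> k"
    using morphism k subring_of_int[OF subfield_is_subring[OF subfield]]
    unfolding ring_morphism_on_def by blast
  also have "\<dots> = of_int (z * N) * \<phi> k" by (simp only: ring_morphism_on_of_int[OF subfield morphism])
  finally have \<phi>a: "\<phi> a = of_int (z * N) * \<phi> k" .
  define M where "M = z * N * m"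
  have M: "M \<noteq> 0" unfolding M_def using z_pos N m by simp
  have Mx: "of_int M * (\<phi> k * x) = \<phi> a * (of_int m * x)" unfolding M_def \<phi>a by (simp add: algebra_simps)
  have A: "\<rho> (of_int m * x) \<in> carrier_mat n n" using ring_hom_GR_carrier[OF \<rho> m(2)] .
  have "rho_Q G \<rho> (\<phi> k * x) = (1 / of_int M) \<cdot>\<^sub>m \<rho> (\<phi> a * (of_int m * x))"
    using rho_Q_eq[OF order \<rho> M, of "\<phi> k * x"] subring_mult[OF G_subring phi_O_prime[OF a] m(2)]
    unfolding Mx by simp
  also have "\<dots> = (1 / of_int M) \<cdot>\<^sub>m ((a \<cdot>\<^sub>m 1\<^sub>m n) * \<rho> (of_int m * x))"
    using \<rho> phi_O_prime[OF a] m(2) scalar[OF a] unfolding ring_hom_GR_def by simp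
  also have "\<dots> = (a / of_int M) \<cdot>\<^sub>m \<rho> (of_int m * x)"
    using A by (simp add: mult_smult_assoc_mat[OF one_carrier_mat A] smult_smult_mat)
  also have "\<dots> = k \<cdot>\<^sub>m ((1 / of_int m) \<cdot>\<^sub>m \<rho> (of_int m * x))"
    using z_pos N m unfolding a_def M_def by (simp add: smult_smult_mat field_simps)
  also have "\<dots> = k \<cdot>\<^sub>m rho_Q G \<rho> x" using rho_Q_eq[OF order \<rho> m] by simp
  finally show ?thesis .
qed

lemma Hom_phi_iff:
  "\<rho> \<in> Hom_phi G K n \<phi> \<longleftrightarrow> ring_hom_GR G K n \<rho> \<and> (\<forall>a\<in>O'. \<rho> (\<phi> a) = a \<cdot>\<^sub>m 1\<^sub>m n)"
proof
  assume "\<rho> \<in> Hom_phi G K n \<phi>"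
  then have \<rho>: "ring_hom_GR G K n \<rho>" and compat: "phi_compatible G K n \<phi> \<rho>"
    unfolding Hom_phi_def by auto
  have "\<rho> (\<phi> a) = a \<cdot>\<^sub>m 1\<^sub>m n" if a: "a \<in> O'" for a
  proof -
    have "rho_Q G \<rho> (\<phi> a * 1) = a \<cdot>\<^sub>m rho_Q G \<rho> 1" "rho_Q G \<rho> 1 = 1\<^sub>m n"
      using compat O_prime_K[OF a] unfolding phi_compatible_def by blast+
    then show ?thesis using rho_Q_of_mem[OF order \<rho> phi_O_prime[OF a]] by simp
  qed
  with \<rho> show "ring_hom_GR G K n \<rho> \<and> (\<forall>a\<in>O'. \<rho> (\<phi> a) = a \<cdot>\<^sub>m 1\<^sub>m n)" by blast
next
  assume "ring_hom_GR G K n \<rho> \<and> (\<forall>a\<in>O'. \<rho> (\<phi> a) = a \<cdot>\<^sub>m 1\<^sub>m n)"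
  then have \<rho>: "ring_hom_GR G K n \<rho>" and scalar: "\<And>a. a \<in> O' \<Longrightarrow> \<rho> (\<phi> a) = a \<cdot>\<^sub>m 1\<^sub>m n" by auto
  show "\<rho> \<in> Hom_phi G K n \<phi>"
    unfolding Hom_phi_def phi_compatible_def mem_Collect_eq
    using \<rho> rho_Q_matK[OF order subfield \<rho>] rho_Q_one[OF order \<rho>] rho_Q_add[OF order \<rho>]
      rho_Q_mult[OF order \<rho>] rho_Q_scalar[OF \<rho> scalar] by blast
qed

lemma Hom_phi_ring_hom: "\<rho> \<in> Hom_phi G K n \<phi> \<Longrightarrow> ring_hom_GR G K n \<rho>"
  unfolding Hom_phi_def by simp

lemma Hom_phi_scalar_mult_vec:
  assumes "\<rho> \<in> Hom_phi G K n \<phi>" "a \<in> O'" "v \<in> vecs_over OK n"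
  shows "\<rho> (\<phi> a) *\<^sub>v v = a \<cdot>\<^sub>v v"
  using assms Hom_phi_iff smult_mat_mult_vec[OF one_carrier_mat vecs_over_carrier[OF assms(3)]]
    vecs_over_carrier[OF assms(3)] by simp

lemma rep_module_restrict_iso:
  assumes "\<rho> \<in> Hom_phi G K n \<phi>"
  shows "module_iso O' (restrict_scalars \<phi> (rep_module K n \<rho>)) (OKn_module K n) id"
  using Hom_phi_scalar_mult_vec[OF assms]
  unfolding module_iso_def restrict_scalars_def by (simp add: rep_module_simps OKn_module_simps)

lemma rep_module_iso_linear:
  assumes \<rho>: "\<rho> \<in> Hom_phi G K n \<phi>" and \<sigma>: "\<sigma> \<in> Hom_phi G K n \<phi>"
    and iso: "module_iso G (rep_module K n \<rho>) (rep_module K n \<sigma>) h"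
  shows "linear_on_vecs OK n h"
proof (rule linear_on_vecs_if_multiples[OF OK_subring z_pos])
  have bij: "bij_betw h (vecs_over OK n) (vecs_over OK n)"
    and intertwine: "\<And>g v. g \<in> G \<Longrightarrow> v \<in> vecs_over OK n \<Longrightarrow> h (\<rho> g *\<^sub>v v) = \<sigma> g *\<^sub>v h v"
    using iso unfolding module_iso_def rep_module_simps by auto
  show maps: "\<And>v. v \<in> vecs_over OK n \<Longrightarrow> h v \<in> vecs_over OK n" using bij_betwE[OF bij] by blast
  show "\<And>v w. v \<in> vecs_over OK n \<Longrightarrow> w \<in> vecs_over OK n \<Longrightarrow> h (v + w) = h v + h w"
    using iso unfolding module_iso_def rep_module_simps by simp
  fix c v assume c: "c \<in> OK" and v: "v \<in> vecs_over OK n"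
  then have a: "of_int z * c \<in> O'" by (intro O_prime_multiple)
  have "h ((of_int z * c) \<cdot>\<^sub>v v) = h (\<rho> (\<phi> (of_int z * c)) *\<^sub>v v)"
    using Hom_phi_scalar_mult_vec[OF \<rho> a v] by simp
  also have "\<dots> = \<sigma> (\<phi> (of_int z * c)) *\<^sub>v h v" using intertwine[OF phi_O_prime[OF a] v] .
  also have "\<dots> = (of_int z * c) \<cdot>\<^sub>v h v" using Hom_phi_scalar_mult_vec[OF \<sigma> a maps[OF v]] .
  finally show "h ((of_int z * c) \<cdot>\<^sub>v v) = (of_int z * c) \<cdot>\<^sub>v h v" .
qed

lemma rep_module_iso_intertwines:
  assumes \<rho>: "\<rho> \<in> Hom_phi G K n \<phi>" and \<sigma>: "\<sigma> \<in> Hom_phi G K n \<phi>"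
    and iso: "module_iso G (rep_module K n \<rho>) (rep_module K n \<sigma>) h" and g: "g \<in> G"
  shows "\<sigma> g * mat_of_map n h = mat_of_map n h * \<rho> g"
proof -
  have lin: "linear_on_vecs OK n h" using rep_module_iso_linear[OF \<rho> \<sigma> iso] .
  have intertwine: "\<And>v. v \<in> vecs_over OK n \<Longrightarrow> h (\<rho> g *\<^sub>v v) = \<sigma> g *\<^sub>v h v"
    using iso g unfolding module_iso_def rep_module_simps by auto
  have \<rho>g: "\<rho> g \<in> carrier_mat n n" and \<sigma>g: "\<sigma> g \<in> carrier_mat n n"
    using ring_hom_GR_carrier Hom_phi_ring_hom \<rho> \<sigma> g by blast+
  show ?thesis
  proof (rule mat_eq_if_unit_vec)
    fix j assume "j < n"
    then have e: "unit_vec n j \<in> vecs_over OK n" by (rule vecs_over_unit_vec[OF OK_subring])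
    moreover have "\<rho> g *\<^sub>v unit_vec n j \<in> vecs_over OK n"
      using matR_mult_vec[OF subfield _ e] Hom_phi_ring_hom[OF \<rho>] g unfolding ring_hom_GR_def by blast
    ultimately show "(\<sigma> g * mat_of_map n h) *\<^sub>v unit_vec n j = (mat_of_map n h * \<rho> g) *\<^sub>v unit_vec n j"
      using mat_of_map_mult_vec[OF OK_subring lin] intertwine
        assoc_mult_mat_vec[OF \<sigma>g mat_of_map_carrier unit_vec_carrier]
        assoc_mult_mat_vec[OF mat_of_map_carrier \<rho>g unit_vec_carrier]
      by simp
  qed (use mult_carrier_mat[OF \<sigma>g mat_of_map_carrier] mult_carrier_mat[OF mat_of_map_carrier \<rho>g] in auto)
qed

lemma conj_rel_if_rep_module_iso:
  assumes \<rho>: "\<rho> \<in> Hom_phi G K n \<phi>" and \<sigma>: "\<sigma> \<in> Hom_phi G K n \<phi>"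
    and iso: "module_iso G (rep_module K n \<rho>) (rep_module K n \<sigma>) h"
  shows "(\<rho>, \<sigma>) \<in> conj_rel G K n \<phi>"
proof -
  let ?h' = "the_inv_into (vecs_over OK n) h"
  have iso': "module_iso G (rep_module K n \<sigma>) (rep_module K n \<rho>) ?h'"
    using module_iso_module_inv[OF module_rep_module[OF order subfield Hom_phi_ring_hom[OF \<rho>]] iso]
    unfolding rep_module_simps .
  have lin: "linear_on_vecs OK n h" "linear_on_vecs OK n ?h'"
    using rep_module_iso_linear[OF \<rho> \<sigma> iso] rep_module_iso_linear[OF \<sigma> \<rho> iso'] .
  have bij: "bij_betw h (vecs_over OK n) (vecs_over OK n)"
    using iso unfolding module_iso_def rep_module_simps by auto
  define U where "U = mat_of_map n h"
  define V where "V = mat_of_map n ?h'"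
  have U: "U \<in> matR K n" and V: "V \<in> matR K n"
    unfolding U_def V_def matR_def using mat_of_map_carrier mat_of_map_entries[OF OK_subring] lin by blast+
  have UV: "U * V = 1\<^sub>m n" "V * U = 1\<^sub>m n"
    unfolding U_def V_def
    using mat_of_map_mult_inverse[OF OK_subring lin] mat_of_map_mult_inverse[OF OK_subring lin(2,1)]
      f_the_inv_into_f_bij_betw[OF bij] the_inv_into_f_f[OF bij_betw_imp_inj_on[OF bij]]
    by auto
  have "\<sigma> g = U * \<rho> g * V" if g: "g \<in> G" for g
  proof -
    have \<sigma>g: "\<sigma> g \<in> carrier_mat n n"
      using ring_hom_GR_carrier[OF Hom_phi_ring_hom[OF \<sigma>] g] .
    have "U * \<rho> g * V = \<sigma> g * U * V"
      using rep_module_iso_intertwines[OF \<rho> \<sigma> iso g] unfolding U_def by simp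
    also have "\<dots> = \<sigma> g" using UV assoc_mult_mat[OF \<sigma>g mat_of_map_carrier mat_of_map_carrier] \<sigma>g
      unfolding U_def V_def by simp
    finally show ?thesis by simp
  qed
  moreover have "\<sigma> \<in> extensional G" using Hom_phi_ring_hom[OF \<sigma>] unfolding ring_hom_GR_def by blast
  ultimately have "\<sigma> = (\<lambda>g\<in>G. U * \<rho> g * V)" by (auto simp: extensional_def)
  moreover have "U \<in> unitsR K n" unfolding unitsR_def using U V UV by blast
  ultimately show ?thesis unfolding conj_rel_def using \<rho> \<sigma> V UV by blast
qed

lemma rep_module_iso_if_conj_rel:
  assumes "(\<rho>, \<sigma>) \<in> conj_rel G K n \<phi>"
  shows "\<exists>h. module_iso G (rep_module K n \<rho>) (rep_module K n \<sigma>) h"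
proof -
  obtain u v where u: "u \<in> matR K n" and v: "v \<in> matR K n" and uv: "u * v = 1\<^sub>m n" "v * u = 1\<^sub>m n"
    and \<sigma>: "\<sigma> = (\<lambda>x\<in>G. u * \<rho> x * v)" and \<rho>: "\<rho> \<in> Hom_phi G K n \<phi>"
    using assms unfolding conj_rel_def unitsR_def by blast
  have uc: "u \<in> carrier_mat n n" and vc: "v \<in> carrier_mat n n" using u v unfolding matR_def by auto
  note carrier = vecs_over_carrier[of _ OK] ring_hom_GR_carrier[OF Hom_phi_ring_hom[OF \<rho>]]
  have "module_iso G (rep_module K n \<rho>) (rep_module K n \<sigma>) (\<lambda>w. u *\<^sub>v w)"
    unfolding module_iso_def rep_module_simps
  proof (intro conjI ballI)
    show "bij_betw (\<lambda>w. u *\<^sub>v w) (vecs_over OK n) (vecs_over OK n)"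
    proof (rule bij_betw_byWitness[where f' = "\<lambda>w. v *\<^sub>v w"])
      show "\<forall>w\<in>vecs_over OK n. v *\<^sub>v (u *\<^sub>v w) = w" "\<forall>w\<in>vecs_over OK n. u *\<^sub>v (v *\<^sub>v w) = w"
        using uv assoc_mult_mat_vec[OF vc uc carrier(1)] assoc_mult_mat_vec[OF uc vc carrier(1)] carrier(1)
        by auto
      show "(\<lambda>w. u *\<^sub>v w) ` vecs_over OK n \<subseteq> vecs_over OK n" "(\<lambda>w. v *\<^sub>v w) ` vecs_over OK n \<subseteq> vecs_over OK n"
        using matR_mult_vec[OF subfield] u v by auto
    qed
    fix x y assume "x \<in> vecs_over OK n" "y \<in> vecs_over OK n"
    then show "u *\<^sub>v (x + y) = u *\<^sub>v x + u *\<^sub>v y" using uc carrier mult_add_distrib_mat_vec by metis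
  next
    fix g x assume g: "g \<in> G" and x: "x \<in> vecs_over OK n"
    have xc: "x \<in> carrier_vec n" and \<rho>g: "\<rho> g \<in> carrier_mat n n" using carrier x g by auto
    have "\<sigma> g *\<^sub>v (u *\<^sub>v x) = (u * \<rho> g * v) *\<^sub>v (u *\<^sub>v x)" using g \<sigma> by simp
    also have "\<dots> = u *\<^sub>v (\<rho> g *\<^sub>v ((v * u) *\<^sub>v x))"
      using uc vc xc \<rho>g by (simp add: assoc_mult_mat_vec[of _ n n _ n])
    also have "\<dots> = u *\<^sub>v (\<rho> g *\<^sub>v x)" using uv xc by simp
    finally show "u *\<^sub>v (\<rho> g *\<^sub>v x) = \<sigma> g *\<^sub>v (u *\<^sub>v x)" by simp
  qed
  then show ?thesis by blast
qed

lemma conj_rel_iff_rep_module_iso: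
  assumes "\<rho> \<in> Hom_phi G K n \<phi>" "\<sigma> \<in> Hom_phi G K n \<phi>"
  shows "(\<rho>, \<sigma>) \<in> conj_rel G K n \<phi> \<longleftrightarrow> (\<exists>h. module_iso G (rep_module K n \<rho>) (rep_module K n \<sigma>) h)"
  using rep_module_iso_if_conj_rel conj_rel_if_rep_module_iso[OF assms] by blast

end

section \<open>Every module of \<open>J_\<phi>\<close> comes from a representation\<close>

locale J_module = phi_order +
  fixes n :: nat and X :: "('a, 'm) module" and f :: "'m \<Rightarrow> 'a vec"
  assumes module_X: "module (subring_ring G) X"
    and f_iso: "module_iso O' (restrict_scalars \<phi> X) (OKn_module K n) f"
begin

definition f_inv :: "'a vec \<Rightarrow> 'm" where
  "f_inv = the_inv_into (carrier X) f"

definition action :: "'a \<Rightarrow> 'a vec \<Rightarrow> 'a vec" where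
  "action g w = f (g \<odot>\<^bsub>X\<^esub> f_inv w)"

definition rep :: "'a \<Rightarrow> 'a mat" where
  "rep = (\<lambda>g\<in>G. mat_of_map n (action g))"

interpretation X: module "subring_ring G" X by (fact module_X)

lemma smult_closed: "g \<in> G \<Longrightarrow> x \<in> carrier X \<Longrightarrow> g \<odot>\<^bsub>X\<^esub> x \<in> carrier X"
  using X.smult_closed unfolding subring_ring_simps .

lemma f_inv_iso: "module_iso O' (OKn_module K n) (restrict_scalars \<phi> X) f_inv"
  unfolding f_inv_def
  using module_iso_inv[OF f_iso] X.a_closed smult_closed phi_O_prime
  by (simp add: restrict_scalars_def)

lemma f_bij: "bij_betw f (carrier X) (vecs_over OK n)"
  using f_iso unfolding module_iso_def restrict_scalars_def OKn_module_simps by simp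

lemma f_inv_bij: "bij_betw f_inv (vecs_over OK n) (carrier X)"
  unfolding f_inv_def using bij_betw_the_inv_into[OF f_bij] .

lemma f_f_inv: "w \<in> vecs_over OK n \<Longrightarrow> f (f_inv w) = w"
  unfolding f_inv_def using f_the_inv_into_f_bij_betw[OF f_bij] .

lemma f_inv_f: "x \<in> carrier X \<Longrightarrow> f_inv (f x) = x"
  unfolding f_inv_def using the_inv_into_f_f[OF bij_betw_imp_inj_on[OF f_bij]] .

lemma f_add: "x \<in> carrier X \<Longrightarrow> y \<in> carrier X \<Longrightarrow> f (x \<oplus>\<^bsub>X\<^esub> y) = f x + f y"
  using f_iso unfolding module_iso_def restrict_scalars_def OKn_module_simps by simp

lemma f_scalar: "a \<in> O' \<Longrightarrow> x \<in> carrier X \<Longrightarrow> f (\<phi> a \<odot>\<^bsub>X\<^esub> x) = a \<cdot>\<^sub>v f x"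
  using f_iso unfolding module_iso_def restrict_scalars_def OKn_module_simps by simp

lemma f_inv_carrier: "w \<in> vecs_over OK n \<Longrightarrow> f_inv w \<in> carrier X"
  using bij_betwE[OF f_inv_bij] by blast

lemma f_carrier: "x \<in> carrier X \<Longrightarrow> f x \<in> vecs_over OK n"
  using bij_betwE[OF f_bij] by blast

lemma action_vecs_over: "g \<in> G \<Longrightarrow> w \<in> vecs_over OK n \<Longrightarrow> action g w \<in> vecs_over OK n"
  unfolding action_def by (intro f_carrier smult_closed f_inv_carrier)

lemma action_add_vec:
  assumes "g \<in> G" "v \<in> vecs_over OK n" "w \<in> vecs_over OK n"
  shows "action g (v + w) = action g v + action g w"
proof -
  have "f_inv (v + w) = f_inv v \<oplus>\<^bsub>X\<^esub> f_inv w"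
    using f_inv_iso assms(2,3) unfolding module_iso_def restrict_scalars_def OKn_module_simps by simp
  then show ?thesis
    unfolding action_def using assms X.smult_r_distr f_add smult_closed f_inv_carrier
    unfolding subring_ring_simps by simp
qed

lemma action_mult:
  assumes "g \<in> G" "h \<in> G" "w \<in> vecs_over OK n"
  shows "action (g * h) w = action g (action h w)"
  unfolding action_def using assms X.smult_assoc1 f_inv_f smult_closed f_inv_carrier
  unfolding subring_ring_simps by simp

lemma action_add:
  assumes "g \<in> G" "h \<in> G" "w \<in> vecs_over OK n"
  shows "action (g + h) w = action g w + action h w"
  unfolding action_def using assms X.smult_l_distr f_add smult_closed f_inv_carrier
  unfolding subring_ring_simps by simp

lemma action_one: "w \<in> vecs_over OK n \<Longrightarrow> action 1 w = w"
  unfolding action_def using X.smult_one f_inv_carrier f_f_inv unfolding subring_ring_simps by simp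

lemma action_scalar:
  assumes "a \<in> O'" "w \<in> vecs_over OK n"
  shows "action (\<phi> a) w = a \<cdot>\<^sub>v w"
  unfolding action_def using f_scalar[OF assms(1) f_inv_carrier] f_f_inv assms(2) by simp

lemma action_commutes_scalar:
  assumes "g \<in> G" "a \<in> O'" "w \<in> vecs_over OK n"
  shows "action g (a \<cdot>\<^sub>v w) = a \<cdot>\<^sub>v action g w"
proof -
  have "action g (a \<cdot>\<^sub>v w) = action g (action (\<phi> a) w)" using action_scalar assms(2,3) by simp
  also have "\<dots> = action (\<phi> a) (action g w)"
    using action_mult[symmetric] assms phi_O_prime by (simp add: action_vecs_over mult.commute)
  also have "\<dots> = a \<cdot>\<^sub>v action g w" using action_scalar assms action_vecs_over by simp
  finally show ?thesis .
qed

lemma action_linear: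
  assumes "g \<in> G"
  shows "linear_on_vecs OK n (action g)"
proof (rule linear_on_vecs_if_multiples[OF OK_subring z_pos])
  fix b v assume "b \<in> OK" "v \<in> vecs_over OK n"
  then show "action g ((of_int z * b) \<cdot>\<^sub>v v) = (of_int z * b) \<cdot>\<^sub>v action g v"
    using action_commutes_scalar[OF assms O_prime_multiple] by blast
qed (use assms action_vecs_over action_add_vec in auto)

lemma rep_mult_vec: "g \<in> G \<Longrightarrow> w \<in> vecs_over OK n \<Longrightarrow> rep g *\<^sub>v w = action g w"
  unfolding rep_def using mat_of_map_mult_vec[OF OK_subring action_linear] by simp

lemma rep_eqI:
  assumes "A \<in> carrier_mat n n" "g \<in> G" "\<And>w. w \<in> vecs_over OK n \<Longrightarrow> A *\<^sub>v w = action g w"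
  shows "rep g = A"
  using assms rep_mult_vec vecs_over_unit_vec[OF OK_subring]
  by (intro mat_eq_if_unit_vec[OF _ assms(1)]) (auto simp: rep_def mat_of_map_carrier)

lemma rep_Hom_phi: "rep \<in> Hom_phi G K n \<phi>"
  unfolding Hom_phi_iff ring_hom_GR_def
proof (intro conjI ballI)
  note carrier = mat_of_map_carrier vecs_over_carrier[of _ OK]
  have rep_carrier: "g \<in> G \<Longrightarrow> rep g \<in> carrier_mat n n" for g by (simp add: rep_def carrier)
  show "rep \<in> extensional G" unfolding rep_def by simp
  show "rep g \<in> matR K n" if "g \<in> G" for g
    using that mat_of_map_entries[OF OK_subring action_linear] mat_of_map_carrier
    unfolding rep_def matR_def by simp
  show "rep 1 = 1\<^sub>m n" using action_one subring_one[OF G_subring] by (intro rep_eqI) (auto simp: carrier)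
  fix x y assume x: "x \<in> G" and y: "y \<in> G"
  show "rep (x + y) = rep x + rep y"
  proof (rule rep_eqI)
    fix w assume w: "w \<in> vecs_over OK n"
    show "(rep x + rep y) *\<^sub>v w = action (x + y) w"
      using add_mult_distrib_mat_vec[OF rep_carrier[OF x] rep_carrier[OF y] carrier(2)[OF w]]
        rep_mult_vec action_add x y w by simp
  qed (use rep_carrier x y subring_add[OF G_subring] in auto)
  show "rep (x * y) = rep x * rep y"
  proof (rule rep_eqI)
    fix w assume w: "w \<in> vecs_over OK n"
    show "(rep x * rep y) *\<^sub>v w = action (x * y) w"
      using assoc_mult_mat_vec[OF rep_carrier[OF x] rep_carrier[OF y] carrier(2)[OF w]]
        rep_mult_vec action_mult action_vecs_over x y w by simp
  qed (use mult_carrier_mat[OF rep_carrier[OF x] rep_carrier[OF y]] x y subring_mult[OF G_subring] in auto)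
next
  show "rep (\<phi> a) = a \<cdot>\<^sub>m 1\<^sub>m n" if "a \<in> O'" for a
    using that phi_O_prime action_scalar
    by (intro rep_eqI) (auto simp: smult_mat_mult_vec[OF one_carrier_mat] vecs_over_carrier[of _ OK])
qed

lemma module_iso_rep_module: "module_iso G (rep_module K n rep) X f_inv"
  unfolding module_iso_def rep_module_simps
proof (intro conjI ballI)
  show "bij_betw f_inv (vecs_over OK n) (carrier X)" by (fact f_inv_bij)
  show "f_inv (v + w) = f_inv v \<oplus>\<^bsub>X\<^esub> f_inv w" if "v \<in> vecs_over OK n" "w \<in> vecs_over OK n" for v w
    using f_inv_iso that unfolding module_iso_def restrict_scalars_def OKn_module_simps by simp
  show "f_inv (rep g *\<^sub>v w) = g \<odot>\<^bsub>X\<^esub> f_inv w" if "g \<in> G" "w \<in> vecs_over OK n" for g w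
    using that rep_mult_vec f_inv_f smult_closed f_inv_carrier unfolding action_def by simp
qed

end

context phi_order
begin

lemma J_mods_iso_rep_module:
  assumes "X \<in> J_mods G K n \<phi> z"
  shows "\<exists>\<rho>\<in>Hom_phi G K n \<phi>. \<exists>f. module_iso G (rep_module K n \<rho>) X f"
proof -
  obtain f where "module (subring_ring G) X" "module_iso O' (restrict_scalars \<phi> X) (OKn_module K n) f"
    using assms unfolding J_mods_def by blast
  then interpret J_module G K \<phi> z n X f
    using phi_order_axioms by (simp add: J_module_def J_module_axioms_def)
  show ?thesis using rep_Hom_phi module_iso_rep_module by blast
qed

lemma transport_rep_module_J_mods:
  assumes \<rho>: "\<rho> \<in> Hom_phi G K n \<phi>" and enc: "inj_on enc (carrier (rep_module K n \<rho>))"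
  shows "transport_module (rep_module K n \<rho>) enc \<in> J_mods G K n \<phi> z"
proof -
  let ?V = "rep_module K n \<rho>"
  have V: "module (subring_ring G) ?V" using module_rep_module[OF order subfield Hom_phi_ring_hom[OF \<rho>]] .
  obtain d where d: "module_iso G (transport_module ?V enc) ?V d"
    using module_iso_module_inv[OF V module_iso_transport_module[OF enc]] by blast
  have "module_iso O' (restrict_scalars \<phi> (transport_module ?V enc)) (OKn_module K n) (id \<circ> d)"
    using module_iso_comp[OF module_iso_restrict_scalars[OF d] rep_module_restrict_iso[OF \<rho>]]
      phi_O_prime by blast
  with module_transport_module[OF V enc] show ?thesis unfolding J_mods_def by blast
qed

lemma bij_Hom_phi_quotient_J_mods:
  fixes enc :: "'a vec \<Rightarrow> nat"
  assumes enc: "inj enc"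
  shows "\<exists>f. bij_betw f (Hom_phi G K n \<phi> // conj_rel G K n \<phi>)
                (J_mods G K n \<phi> z // Gamma_iso_rel G (J_mods G K n \<phi> z))"
proof -
  let ?H = "Hom_phi G K n \<phi>" and ?J = "J_mods G K n \<phi> z"
  define F where "F \<rho> = transport_module (rep_module K n \<rho>) enc" for \<rho>
  have module_rep: "module (subring_ring G) (rep_module K n \<rho>)" if "\<rho> \<in> ?H" for \<rho>
    using module_rep_module[OF order subfield Hom_phi_ring_hom[OF that]] .
  have inj: "inj_on enc (carrier (rep_module K n \<rho>))" for \<rho>
    using inj_on_subset[OF enc subset_UNIV] .
  have enc_iso: "module_iso G (rep_module K n \<rho>) (F \<rho>) enc" for \<rho>
    unfolding F_def using module_iso_transport_module[OF inj] .
  have enc_iso': "\<exists>d. module_iso G (F \<rho>) (rep_module K n \<rho>) d" if "\<rho> \<in> ?H" for \<rho>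
    using module_iso_module_inv[OF module_rep[OF that] enc_iso] by blast
  have F_J: "F \<rho> \<in> ?J" if "\<rho> \<in> ?H" for \<rho>
    unfolding F_def using transport_rep_module_J_mods[OF that inj] .
  show ?thesis
  proof (rule bij_betw_quotients)
    show "conj_rel G K n \<phi> \<subseteq> ?H \<times> ?H" unfolding conj_rel_def by auto
    show "equiv ?J (Gamma_iso_rel G ?J)" by (rule equiv_Gamma_iso_rel) (simp add: J_mods_def)
    show "\<And>\<rho>. \<rho> \<in> ?H \<Longrightarrow> F \<rho> \<in> ?J" by (rule F_J)
  next
    fix \<rho> \<sigma> assume \<rho>: "\<rho> \<in> ?H" and \<sigma>: "\<sigma> \<in> ?H"
    have "(\<exists>h. module_iso G (F \<rho>) (F \<sigma>) h) \<longleftrightarrow> (\<exists>h. module_iso G (rep_module K n \<rho>) (rep_module K n \<sigma>) h)"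
      using module_iso_comp enc_iso enc_iso'[OF \<rho>] enc_iso'[OF \<sigma>] by meson
    then show "(\<rho>, \<sigma>) \<in> conj_rel G K n \<phi> \<longleftrightarrow> (F \<rho>, F \<sigma>) \<in> Gamma_iso_rel G ?J"
      unfolding Gamma_iso_rel_def conj_rel_iff_rep_module_iso[OF \<rho> \<sigma>] using F_J \<rho> \<sigma> by auto
  next
    fix X assume X: "X \<in> ?J"
    then obtain \<rho> h where \<rho>: "\<rho> \<in> ?H" and h: "module_iso G (rep_module K n \<rho>) X h"
      using J_mods_iso_rep_module by blast
    obtain d where "module_iso G (F \<rho>) (rep_module K n \<rho>) d" using enc_iso'[OF \<rho>] by blast
    then have "module_iso G (F \<rho>) X (h \<circ> d)" using module_iso_comp[OF _ h] by blast
    then show "\<exists>\<rho>\<in>?H. (F \<rho>, X) \<in> Gamma_iso_rel G ?J"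
      unfolding Gamma_iso_rel_def using F_J[OF \<rho>] X \<rho> by blast
  qed
qed

end

theorem proposition10p5:
  fixes G K :: "'a::field_char_0 set" and \<phi> :: "'a \<Rightarrow> 'a" and n :: nat and z :: int
  assumes "number_field_type TYPE('a)"
    and "is_order G"
    and "is_subfield K"
    and "n = field_degree K"
    and "ring_morphism_on K \<phi>"
    and "z > 0" and "(\<lambda>a. \<phi> (of_int z * a)) ` ring_of_integers K \<subseteq> G"
  shows "\<exists>f. bij_betw f (Hom_phi G K n \<phi> // conj_rel G K n \<phi>)
                (J_mods G K n \<phi> z // Gamma_iso_rel G (J_mods G K n \<phi> z))"
proof -
  interpret phi_order G K \<phi> z using assms(2,3,5-7) by unfold_locales
  obtain enc :: "'a vec \<Rightarrow> nat" where "inj enc" using inj_vec_to_nat[OF assms(1)] .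
  then show ?thesis by (rule bij_Hom_phi_quotient_J_mods)
qed

end
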